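(* Let $n\ge1$ and $d\in\mathbb{N}$, define $N$ by $N(n,d)=N+1$, and let $p>0$ be a real number with $p\le d$. Let $\{r_k\}_{k\in\mathbb{N}}$ be a sequence of positive reals and $A_k=\{\mathbf{a}^k_0,\dots,\mathbf{a}^k_N\}\subset\mathbb{R}^n$ ($k\in\mathbb{N}$) sets of $N+1$ distinct points. Suppose that: (1) $A_k$ is contained in the closed ball of radius $r_k$ centred at $\mathbf{a}^k_0$; (2) $\lim_{k\to\infty}r_k=0$; (3) $\lim_{k\to\infty}\mathbf{a}^k_0=\mathbf{0}$; (4) there exist $c,e>0$ such that $|\operatorname{Det}V(A_k)|\ge c\cdot r_k^{e}$ for all $k\in\mathbb{N}$. Let $f$ be a $C^d$ function defined in a neighbourhood of $\mathbf{0}$, and put $S_k:=r_k^{-p}\max\{|f(\mathbf{x})|:\mathbf{x}\in A_k\}$ and $m:=p-\bigl(e-n\cdot N(n+1,d-1)\bigr)$. Then: (i) if $m$ is an integer and $\lim_{k\to\infty}S_k=0$, then $f$ is $m$-flat at $\mathbf{0}$; (ii) if $m$ is not an integer and $(S_k)$ is bounded, then $f$ is $[m]$-flat at $\mathbf{0}$, where $[m]$ is the largest integer not greater than $m$.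
   Context: $N(n,d):=\binom{n+d}{d}$ (with $N(m,-1):=0$). $I(n,d)$ is the set of multi-indices $\mathbf{j}\in\mathbb{Z}_{\ge0}^n$ with $|\mathbf{j}|=j_1+\dots+j_n\le d$, and $\mathbf{x}^{\mathbf{j}}=x_1^{j_1}\cdots x_n^{j_n}$. For a set $A=\{\mathbf{a}_0,\dots,\mathbf{a}_N\}$ of $N(n,d)$ points, with orderings of $A$ and $I(n,d)=\{\mathbf{j}_0,\dots,\mathbf{j}_N\}$ fixed, $V(A)=(\mathbf{a}_i^{\mathbf{j}_l})_{0\le i,l\le N}$ is the Vandermonde matrix; $|\operatorname{Det}V(A)|$ is independent of the orderings. For an integer $k\le d$, a $C^d$ function $f$ near $\mathbf{0}$ is $k$-flat at $\mathbf{0}$ if $\partial^{|\mathbf{q}|}f/\partial\mathbf{x}^{\mathbf{q}}(\mathbf{0})=0$ for all multi-indices $\mathbf{q}$ with $|\mathbf{q}|\le k$. *)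

theory Defs
  imports "HOL-Analysis.Analysis"
begin

definition Ncount :: "nat \<Rightarrow> int \<Rightarrow> nat" where
  "Ncount m k = (if k < 0 then 0 else (m + nat k) choose (nat k))"

definition mindex :: "nat \<Rightarrow> ('n::finite \<Rightarrow> nat) set" where
  "mindex d = {j. sum j UNIV \<le> d}"

definition monomial :: "real^'n \<Rightarrow> ('n::finite \<Rightarrow> nat) \<Rightarrow> real" where
  "monomial x j = (\<Prod>i\<in>UNIV. (x $ i) ^ (j i))"

definition menum :: "nat \<Rightarrow> nat \<Rightarrow> ('n::finite \<Rightarrow> nat)" where
  "menum d = (SOME g. bij_betw g {..<Ncount CARD('n) (int d)} (mindex d))"

definition vdet :: "nat \<Rightarrow> (nat \<Rightarrow> real^'n::finite) \<Rightarrow> real" where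
  "vdet d a = (let M = Ncount CARD('n) (int d) in
     \<Sum>\<sigma> | \<sigma> permutes {..<M}. of_int (sign \<sigma>) *
        (\<Prod>i<M. monomial (a i) (menum d (\<sigma> i))))"

definition partial :: "'n \<Rightarrow> (real^'n::finite \<Rightarrow> real) \<Rightarrow> real^'n \<Rightarrow> real" where
  "partial i g x = deriv (\<lambda>t. g (x + t *\<^sub>R axis i 1)) 0"

fun dpart :: "'n list \<Rightarrow> (real^'n::finite \<Rightarrow> real) \<Rightarrow> real^'n \<Rightarrow> real" where
  "dpart [] g = g"
| "dpart (i # is) g = partial i (dpart is g)"

definition Cd_on :: "nat \<Rightarrow> (real^'n::finite) set \<Rightarrow> (real^'n \<Rightarrow> real) \<Rightarrow> bool" where
  "Cd_on d U f \<longleftrightarrow>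
     (\<forall>is. length is \<le> d \<longrightarrow> continuous_on U (dpart is f)) \<and>
     (\<forall>is i. length is < d \<longrightarrow>
        (\<forall>x\<in>U. (\<lambda>t. dpart is f (x + t *\<^sub>R axis i 1)) differentiable (at 0)))"

definition flat_at0 :: "int \<Rightarrow> (real^'n::finite \<Rightarrow> real) \<Rightarrow> bool" where
  "flat_at0 k f \<longleftrightarrow> (\<forall>is. int (length is) \<le> k \<longrightarrow> dpart is f 0 = 0)"

end

theory Submission
  imports Defs "Jordan_Normal_Form.Determinant"
begin

text \<open>
  Put \<open>x\<^sub>k = a\<^sup>k\<^sub>0\<close> and \<open>b\<^sup>k\<^sub>i = a\<^sup>k\<^sub>i - x\<^sub>k\<close>. Taylor's formula of order \<open>d\<close> at \<open>x\<^sub>k\<close> says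
  \<open>f(a\<^sup>k\<^sub>i) = P\<^sub>k(b\<^sup>k\<^sub>i) + o(r\<^sub>k\<^sup>d)\<close>, where \<open>P\<^sub>k = \<Sum>\<^sub>j C\<^sub>j(x\<^sub>k) X\<^sup>j\<close> is the Taylor polynomial;
  so the Taylor coefficients solve a Vandermonde system whose right-hand side is
  \<open>O(S\<^sub>k r\<^sub>k\<^sup>p) + o(r\<^sub>k\<^sup>d)\<close>. Translating the points multiplies \<open>Det V\<close> by the determinant of
  a matrix depending continuously on \<open>x\<^sub>k\<close>, so \<open>|Det V(b\<^sup>k)| \<ge> c' r\<^sub>k\<^sup>e\<close>. In Cramer's rule
  the column of \<open>X\<^sup>j\<close> has entries \<open>O(r\<^sub>k\<^bsup>|j|\<^esup>)\<close>, and all columns together give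
  \<open>r\<^sub>k\<^bsup>D\<^esup>\<close>, where \<open>D\<close> is the sum of \<open>|j|\<close> over all \<open>|j| \<le> d\<close>, i.e. \<open>D = n N(n+1,d-1)\<close>. Hence
  \<open>|C\<^sub>j(x\<^sub>k)| \<le> const (S\<^sub>k r\<^sub>k\<^bsup>m-|j|\<^esup> + o(1))\<close> with \<open>m = p + D - e\<close>, which tends to \<open>0\<close> for
  \<open>|j| \<le> m\<close> under either hypothesis on \<open>S\<^sub>k\<close>; by continuity \<open>C\<^sub>j(0) = \<partial>\<^sup>jf(0)/j! = 0\<close>.
\<close>

section \<open>Multi-indices\<close>

definition multi_indices :: "'a set \<Rightarrow> nat \<Rightarrow> ('a \<Rightarrow> nat) set" where
  "multi_indices I d = {j. (\<forall>x. x \<notin> I \<longrightarrow> j x = 0) \<and> sum j I \<le> d}"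

lemma multi_indices_empty [simp]: "multi_indices {} d = {\<lambda>_. 0}"
  by (auto simp: multi_indices_def)

lemma multi_indices_0 [simp]: "finite I \<Longrightarrow> multi_indices I 0 = {\<lambda>_. 0}"
  by (auto simp: multi_indices_def fun_eq_iff)

lemma finite_multi_indices [simp]: "finite I \<Longrightarrow> finite (multi_indices I d)"
proof -
  assume "finite I"
  have "inj_on (\<lambda>j. restrict j I) (multi_indices I d)"
  proof (rule inj_onI)
    fix u v assume u: "u \<in> multi_indices I d" and v: "v \<in> multi_indices I d"
      and "restrict u I = restrict v I"
    show "u = v"
    proof
      fix y show "u y = v y"
        using \<open>restrict u I = restrict v I\<close> u v
        by (cases "y \<in> I") (metis restrict_apply', simp add: multi_indices_def)
    qed
  qed
  moreover have "(\<lambda>j. restrict j I) ` multi_indices I d \<subseteq> PiE I (\<lambda>_. {..d})"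
  proof -
    have "j x \<le> d" if "j \<in> multi_indices I d" "x \<in> I" for j x
      using that member_le_sum[of x I j] \<open>finite I\<close> by (simp add: multi_indices_def)
    then show ?thesis by auto
  qed
  ultimately show ?thesis by (rule inj_on_finite) (simp add: \<open>finite I\<close> finite_PiE)
qed

lemma multi_indices_insert_Suc:
  assumes "finite I" "x \<notin> I"
  defines "bump \<equiv> \<lambda>j. j(x := Suc (j x))"
  shows "multi_indices (insert x I) (Suc d) = multi_indices I (Suc d) \<union> bump ` multi_indices (insert x I) d"
    and "multi_indices I (Suc d) \<inter> bump ` multi_indices (insert x I) d = {}"
    and "inj_on bump (multi_indices (insert x I) d)"
proof -
  have sum_upd: "sum (j(x := t)) I = sum j I" for j :: "'a \<Rightarrow> nat" and t using assms(2) by (intro sum.cong) auto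
  have sum_insert: "sum j (insert x I) = j x + sum j I" for j :: "'a \<Rightarrow> nat" using assms by simp
  show "multi_indices (insert x I) (Suc d) = multi_indices I (Suc d) \<union> bump ` multi_indices (insert x I) d"
  proof (intro equalityI subsetI)
    fix j assume j: "j \<in> multi_indices (insert x I) (Suc d)"
    show "j \<in> multi_indices I (Suc d) \<union> bump ` multi_indices (insert x I) d"
    proof (cases "j x")
      case 0
      then have "j \<in> multi_indices I (Suc d)"
        using j sum_insert[of j] by (auto simp: multi_indices_def) (metis insertE)
      then show ?thesis by blast
    next
      case (Suc t)
      then have "j = bump (j(x := t))" by (auto simp: bump_def)
      moreover have "j(x := t) \<in> multi_indices (insert x I) d"
        using j Suc sum_insert[of j] sum_insert[of "j(x := t)"] sum_upd[of j t]
        by (auto simp: multi_indices_def)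
      ultimately show ?thesis by blast
    qed
  next
    fix j assume "j \<in> multi_indices I (Suc d) \<union> bump ` multi_indices (insert x I) d"
    then show "j \<in> multi_indices (insert x I) (Suc d)"
    proof
      assume "j \<in> multi_indices I (Suc d)"
      then show ?thesis using assms sum_insert by (auto simp: multi_indices_def)
    next
      assume "j \<in> bump ` multi_indices (insert x I) d"
      then obtain i where i: "i \<in> multi_indices (insert x I) d" "j = bump i" by auto
      then have "sum j (insert x I) = Suc (sum i (insert x I))"
        using sum_insert[of j] sum_insert[of i] sum_upd[of i] by (simp add: bump_def)
      then show ?thesis using i by (auto simp: multi_indices_def bump_def)
    qed
  qed
  show "multi_indices I (Suc d) \<inter> bump ` multi_indices (insert x I) d = {}"
    using assms by (auto simp: multi_indices_def)
  show "inj_on bump (multi_indices (insert x I) d)"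
    by (rule inj_onI) (metis bump_def fun_upd_apply nat.inject ext)
qed

lemma sum_multi_indices_insert_Suc:
  assumes "finite I" "x \<notin> I"
  shows "(\<Sum>j\<in>multi_indices (insert x I) (Suc d). F j)
    = (\<Sum>j\<in>multi_indices I (Suc d). F j) + (\<Sum>j\<in>multi_indices (insert x I) d. F (j(x := Suc (j x))))"
  using multi_indices_insert_Suc[OF assms, of d] assms(1)
  by (simp add: sum.union_disjoint sum.reindex)

lemma card_multi_indices:
  "finite I \<Longrightarrow> card (multi_indices I d) = (card I + d) choose d"
proof (induction I arbitrary: d rule: finite_induct)
  case (insert x I)
  show ?case
  proof (induction d)
    case (Suc d)
    then show ?case
      using sum_multi_indices_insert_Suc[OF insert(1,2), where d=d and F="\<lambda>_. 1::nat"] insert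
      by simp
  qed (use insert in simp)
qed simp

lemma Ncount_int: "Ncount m (int d) = (m + d) choose d"
  by (simp add: Ncount_def)

lemma Ncount_minus_1 [simp]: "Ncount m (- 1) = 0"
  by (simp add: Ncount_def)

lemma Ncount_Suc_minus_1: "Ncount m (int (Suc d) - 1) = (m + d) choose d"
  by (simp add: Ncount_def)

lemma degree_sum_multi_indices:
  "finite I \<Longrightarrow> (\<Sum>j\<in>multi_indices I d. sum j I) = card I * Ncount (card I + 1) (int d - 1)"
proof (induction I arbitrary: d rule: finite_induct)
  case (insert x I)
  define n where "n = card I"
  have degree_bump: "sum (j(x := Suc (j x))) (insert x I) = Suc (sum j (insert x I))" for j
  proof -
    have "sum (j(x := Suc (j x))) I = sum j I" using insert(2) by (intro sum.cong) auto
    then show ?thesis using insert(1,2) by simp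
  qed
  show ?case
  proof (induction d)
    case (Suc d)
    have unused_x: "sum j (insert x I) = sum j I" if "j \<in> multi_indices I (Suc d)" for j
      using that insert(1,2) by (simp add: multi_indices_def)
    have "(\<Sum>j\<in>multi_indices (insert x I) (Suc d). sum j (insert x I))
      = (\<Sum>j\<in>multi_indices I (Suc d). sum j I)
        + (\<Sum>j\<in>multi_indices (insert x I) d. Suc (sum j (insert x I)))"
      using sum_multi_indices_insert_Suc[OF insert(1,2), where F="\<lambda>j. sum j (insert x I)"]
      by (simp only: degree_bump sum.cong[OF refl unused_x])
    also have "\<dots> = n * Ncount (n + 1) (int d) + (Suc n * Ncount (n + 2) (int d - 1) + (n + 1 + d choose d))"
    proof -
      have "(\<Sum>j\<in>multi_indices I (Suc d). sum j I) = n * Ncount (n + 1) (int d)"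
        using insert.IH[of "Suc d", unfolded Ncount_Suc_minus_1] by (simp add: n_def Ncount_int)
      moreover have "(\<Sum>j\<in>multi_indices (insert x I) d. sum j (insert x I)) = Suc n * Ncount (n + 2) (int d - 1)"
        using Suc insert(1,2) by (simp add: n_def)
      moreover have "card (multi_indices (insert x I) d) = (n + 1 + d) choose d"
        using card_multi_indices[of "insert x I" d] insert(1,2) by (simp add: n_def)
      ultimately show ?thesis by (simp only: sum_Suc)
    qed
    also have "\<dots> = Suc n * Ncount (Suc n + 1) (int (Suc d) - 1)"
    proof (cases d)
      case (Suc e)
      have "Ncount (Suc n + 1) (int (Suc d) - 1) = ((n + 2 + e) choose Suc e) + ((n + 2 + e) choose e)"
        unfolding Suc Ncount_Suc_minus_1 by simp
      moreover have "Ncount (n + 2) (int d - 1) = (n + 2 + e) choose e"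
        unfolding Suc Ncount_Suc_minus_1 by simp
      moreover have "Ncount (n + 1) (int d) = (n + 2 + e) choose Suc e"
        "(n + 1 + d) choose d = (n + 2 + e) choose Suc e"
        unfolding Suc Ncount_int by simp_all
      moreover have "n * X + (Suc n * Y + X) = Suc n * (X + Y)" for X Y :: nat
        by (simp add: algebra_simps)
      ultimately show ?thesis by (simp only:)
    qed (simp add: Ncount_def)
    finally show ?case using insert(1,2) by (simp add: n_def)
  qed (use insert in simp)
qed simp

lemma mindex_eq_multi_indices: "mindex d = multi_indices (UNIV :: 'n::finite set) d"
  by (simp add: mindex_def multi_indices_def)

lemma finite_mindex [simp]: "finite (mindex d :: ('n::finite \<Rightarrow> nat) set)"
  by (simp add: mindex_eq_multi_indices)

lemma card_mindex: "card (mindex d :: ('n::finite \<Rightarrow> nat) set) = Ncount CARD('n) (int d)"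
  by (simp add: mindex_eq_multi_indices card_multi_indices Ncount_int)

lemma degree_sum_mindex:
  "(\<Sum>j\<in>(mindex d :: ('n::finite \<Rightarrow> nat) set). sum j UNIV) = CARD('n) * Ncount (CARD('n) + 1) (int d - 1)"
  by (simp add: mindex_eq_multi_indices degree_sum_multi_indices)

lemma bij_betw_menum:
  "bij_betw (menum d) {..<Ncount CARD('n) (int d)} (mindex d :: ('n::finite \<Rightarrow> nat) set)"
proof -
  have "\<exists>g. bij_betw g {..<Ncount CARD('n) (int d)} (mindex d :: ('n \<Rightarrow> nat) set)"
    using ex_bij_betw_nat_finite[OF finite_mindex] by (auto simp: card_mindex atLeast0LessThan)
  then show ?thesis unfolding menum_def by (rule someI_ex)
qed

section \<open>Partial derivatives\<close>

lemma partial_DERIV: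
  assumes "(\<lambda>t. g (y + t *\<^sub>R axis i 1)) differentiable (at 0)"
  shows "((\<lambda>t. g (y + t *\<^sub>R axis i 1)) has_real_derivative partial i g y) (at 0)"
  using assms unfolding partial_def by (simp add: DERIV_deriv_iff_real_differentiable)

lemma partial_DERIV_at:
  assumes "(\<lambda>t. g ((y + t0 *\<^sub>R axis i 1) + t *\<^sub>R axis i 1)) differentiable (at 0)"
  shows "((\<lambda>t. g (y + t *\<^sub>R axis i 1)) has_real_derivative partial i g (y + t0 *\<^sub>R axis i 1)) (at t0)"
proof -
  have "(\<lambda>t. g ((y + t0 *\<^sub>R axis i 1) + t *\<^sub>R axis i 1)) = (\<lambda>t. g (y + (t + t0) *\<^sub>R axis i 1))"
    by (simp add: scaleR_add_left algebra_simps)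
  then have "((\<lambda>t. g (y + (t + t0) *\<^sub>R axis i 1)) has_real_derivative partial i g (y + t0 *\<^sub>R axis i 1)) (at 0)"
    using partial_DERIV[OF assms] by simp
  then show ?thesis using DERIV_shift[of "\<lambda>t. g (y + t *\<^sub>R axis i 1)" _ 0 t0] by simp
qed

lemma mvt_scaled:
  fixes \<phi> \<phi>' :: "real \<Rightarrow> real"
  assumes "\<And>t. \<bar>t\<bar> \<le> \<bar>s\<bar> \<Longrightarrow> (\<phi> has_real_derivative \<phi>' t) (at t)"
  shows "\<exists>\<theta>. 0 \<le> \<theta> \<and> \<theta> \<le> 1 \<and> \<phi> s - \<phi> 0 = s * \<phi>' (\<theta> * s)"
proof (cases s "0::real" rule: linorder_cases)
  case less
  obtain z where "s < z" "z < 0" "\<phi> 0 - \<phi> s = (0 - s) * \<phi>' z"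
    using MVT2[OF less, of \<phi> \<phi>'] assms by force
  then show ?thesis using less by (intro exI[of _ "z / s"]) (auto simp: field_simps)
next
  case greater
  obtain z where "0 < z" "z < s" "\<phi> s - \<phi> 0 = (s - 0) * \<phi>' z"
    using MVT2[OF greater, of \<phi> \<phi>'] assms by force
  then show ?thesis using greater by (intro exI[of _ "z / s"]) auto
qed (intro exI[of _ 0], auto)

lemma continuous_on_eventually_dist:
  fixes g :: "'a::metric_space \<Rightarrow> 'b::metric_space"
  assumes "open U" "x \<in> U" "continuous_on U g" "0 < \<epsilon>"
  shows "\<forall>\<^sub>F y in nhds x. dist (g y) (g x) < \<epsilon>"
proof -
  have "isCont g x" using assms(1-3) continuous_on_eq_continuous_at by blast
  then have "(g \<longlongrightarrow> g x) (nhds x)" by (simp add: tendsto_nhds_iff isCont_def)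
  then show ?thesis using assms(4) by (rule tendstoD)
qed

text \<open>Walk from \<open>x\<close> to \<open>x + h\<close> one coordinate at a time and apply the mean value theorem
  on each axis-parallel step.\<close>
lemma increment_bound_by_partials:
  fixes g :: "real^'n::finite \<Rightarrow> real"
  assumes near: "\<And>y. dist y x < \<delta> \<Longrightarrow> y \<in> U \<and> (\<forall>i. dist (partial i g y) (partial i g x) < \<epsilon>)"
    and slice: "\<And>y i. y \<in> U \<Longrightarrow> (\<lambda>t. g (y + t *\<^sub>R axis i 1)) differentiable (at 0)"
    and h: "norm h < \<delta>"
  shows "\<bar>g (x + h) - g x - (\<Sum>i\<in>UNIV. h $ i * partial i g x)\<bar> \<le> \<epsilon> * (\<Sum>i\<in>UNIV. \<bar>h $ i\<bar>)"
proof -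
  define P where "P J = (\<chi> i. if i \<in> J then h $ i else 0)" for J :: "'n set"
  have "\<bar>g (x + P J) - g x - (\<Sum>i\<in>J. h $ i * partial i g x)\<bar> \<le> \<epsilon> * (\<Sum>i\<in>J. \<bar>h $ i\<bar>)"
    if "finite J" for J
    using that
  proof (induction J rule: finite_induct)
    case empty
    have "P {} = 0" by (simp add: P_def Finite_Cartesian_Product.vec_eq_iff)
    then show ?case by simp
  next
    case (insert j J)
    have P_insert: "P (insert j J) = P J + h $ j *\<^sub>R axis j 1"
      using insert(2) by (auto simp: P_def Finite_Cartesian_Product.vec_eq_iff axis_def)
    define \<phi> where "\<phi> t = g ((x + P J) + t *\<^sub>R axis j 1)" for t
    have close: "dist ((x + P J) + t *\<^sub>R axis j 1) x < \<delta>" if "\<bar>t\<bar> \<le> \<bar>h $ j\<bar>" for t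
    proof -
      have "norm (P J + t *\<^sub>R axis j 1) \<le> norm h"
        by (rule norm_le_componentwise_cart) (use that insert(2) in \<open>auto simp: P_def axis_def\<close>)
      then show ?thesis using h by (simp add: dist_norm)
    qed
    have deriv: "(\<phi> has_real_derivative partial j g ((x + P J) + t *\<^sub>R axis j 1)) (at t)"
      if "\<bar>t\<bar> \<le> \<bar>h $ j\<bar>" for t
      unfolding \<phi>_def by (intro partial_DERIV_at slice) (use near[OF close[OF that]] in blast)
    obtain \<theta> where \<theta>: "0 \<le> \<theta>" "\<theta> \<le> 1"
      "\<phi> (h $ j) - \<phi> 0 = h $ j * partial j g ((x + P J) + (\<theta> * h $ j) *\<^sub>R axis j 1)"
      using mvt_scaled[of "h $ j" \<phi>, OF deriv] by blast
    have \<theta>_le: "\<bar>\<theta> * h $ j\<bar> \<le> \<bar>h $ j\<bar>" using \<theta> by (simp add: abs_mult mult_left_le_one_le)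
    then have partial_close: "\<bar>partial j g ((x + P J) + (\<theta> * h $ j) *\<^sub>R axis j 1) - partial j g x\<bar> \<le> \<epsilon>"
      using near[OF close[OF \<theta>_le]] unfolding dist_real_def by (meson less_imp_le)
    then have "\<bar>h $ j\<bar> * \<bar>partial j g ((x + P J) + (\<theta> * h $ j) *\<^sub>R axis j 1) - partial j g x\<bar>
        \<le> \<epsilon> * \<bar>h $ j\<bar>"
      using mult_right_mono[OF partial_close abs_ge_zero[of "h $ j"]] by (simp add: mult.commute)
    moreover have "g (x + P (insert j J)) - g (x + P J) - h $ j * partial j g x
        = h $ j * (partial j g ((x + P J) + (\<theta> * h $ j) *\<^sub>R axis j 1) - partial j g x)"
      using \<theta>(3) by (simp add: \<phi>_def P_insert add.assoc algebra_simps)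
    ultimately have "\<bar>g (x + P (insert j J)) - g (x + P J) - h $ j * partial j g x\<bar> \<le> \<epsilon> * \<bar>h $ j\<bar>"
      by (simp add: abs_mult)
    then show ?case using insert(1-3) by (simp add: algebra_simps)
  qed
  from this[of UNIV] show ?thesis by (simp add: P_def Finite_Cartesian_Product.vec_eq_iff[symmetric])
qed

lemma has_derivative_of_continuous_partials:
  fixes g :: "real^'n::finite \<Rightarrow> real"
  assumes U: "open U" "x \<in> U"
    and slice: "\<And>y i. y \<in> U \<Longrightarrow> (\<lambda>t. g (y + t *\<^sub>R axis i 1)) differentiable (at 0)"
    and cont: "\<And>i. continuous_on U (partial i g)"
  shows "(g has_derivative (\<lambda>h. \<Sum>i\<in>UNIV. h $ i * partial i g x)) (at x)"
  unfolding has_derivative_at_alt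
proof (intro conjI allI impI)
  have "(\<lambda>h. \<Sum>i\<in>UNIV. h $ i * partial i g x) = (\<lambda>h. inner h (\<chi> i. partial i g x))"
    by (simp add: inner_vec_def)
  then show "bounded_linear (\<lambda>h. \<Sum>i\<in>UNIV. h $ i * partial i g x)"
    using bounded_linear_inner_left by metis
next
  fix \<epsilon> :: real assume "0 < \<epsilon>"
  define \<epsilon>' where "\<epsilon>' = \<epsilon> / CARD('n)"
  have "0 < \<epsilon>'" using \<open>0 < \<epsilon>\<close> by (simp add: \<epsilon>'_def)
  have "\<forall>\<^sub>F y in nhds x. \<forall>i. dist (partial i g y) (partial i g x) < \<epsilon>'"
    by (rule eventually_all_finite) (use continuous_on_eventually_dist[OF U cont \<open>0 < \<epsilon>'\<close>] in auto)
  with eventually_nhds_in_open[OF U]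
  have "\<forall>\<^sub>F y in nhds x. y \<in> U \<and> (\<forall>i. dist (partial i g y) (partial i g x) < \<epsilon>')"
    by (rule eventually_conj)
  then obtain \<delta> where \<delta>: "0 < \<delta>"
    "\<And>y. dist y x < \<delta> \<Longrightarrow> y \<in> U \<and> (\<forall>i. dist (partial i g y) (partial i g x) < \<epsilon>')"
    unfolding eventually_nhds_metric by blast
  show "\<exists>\<delta>>0. \<forall>y. norm (y - x) < \<delta> \<longrightarrow>
      norm (g y - g x - (\<Sum>i\<in>UNIV. (y - x) $ i * partial i g x)) \<le> \<epsilon> * norm (y - x)"
  proof (intro exI[of _ \<delta>] conjI allI impI \<open>0 < \<delta>\<close>)
    fix y assume "norm (y - x) < \<delta>"
    then have "\<bar>g y - g x - (\<Sum>i\<in>UNIV. (y - x) $ i * partial i g x)\<bar> \<le> \<epsilon>' * (\<Sum>i\<in>UNIV. \<bar>(y - x) $ i\<bar>)"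
      using increment_bound_by_partials[OF \<delta>(2) slice, where h="y - x"] by simp
    also have "\<dots> \<le> \<epsilon>' * (\<Sum>i\<in>(UNIV::'n set). norm (y - x))"
      using \<open>0 < \<epsilon>'\<close> by (intro mult_left_mono sum_mono component_le_norm_cart) auto
    also have "\<dots> = \<epsilon> * norm (y - x)" by (simp add: \<epsilon>'_def)
    finally show "norm (g y - g x - (\<Sum>i\<in>UNIV. (y - x) $ i * partial i g x)) \<le> \<epsilon> * norm (y - x)"
      by simp
  qed
qed

lemma has_real_derivative_along_line:
  fixes g :: "real^'n::finite \<Rightarrow> real"
  assumes "(g has_derivative (\<lambda>v. \<Sum>i\<in>UNIV. v $ i * c i)) (at (x + t *\<^sub>R h))"
  shows "((\<lambda>t. g (x + t *\<^sub>R h)) has_real_derivative (\<Sum>i\<in>UNIV. h $ i * c i)) (at t)"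
proof -
  have "((\<lambda>t. x + t *\<^sub>R h) has_derivative (\<lambda>t. t *\<^sub>R h)) (at t)"
    by (auto intro!: derivative_eq_intros)
  from has_derivative_compose[OF this assms]
  have "((\<lambda>t. g (x + t *\<^sub>R h)) has_derivative (\<lambda>s. \<Sum>i\<in>UNIV. (s *\<^sub>R h) $ i * c i)) (at t)" .
  moreover have "(\<lambda>s. \<Sum>i\<in>UNIV. (s *\<^sub>R h) $ i * c i) = (*) (\<Sum>i\<in>UNIV. h $ i * c i)"
    by (auto simp: sum_distrib_left algebra_simps)
  ultimately show ?thesis by (simp add: has_field_derivative_def)
qed

lemma Cd_on_continuous_on: "Cd_on d U f \<Longrightarrow> length is \<le> d \<Longrightarrow> continuous_on U (dpart is f)"
  by (simp add: Cd_on_def)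

lemma Cd_on_differentiable:
  "Cd_on d U f \<Longrightarrow> length is < d \<Longrightarrow> x \<in> U \<Longrightarrow> (\<lambda>t. dpart is f (x + t *\<^sub>R axis i 1)) differentiable (at 0)"
  by (simp add: Cd_on_def)

lemma Cd_on_has_derivative:
  assumes "Cd_on d U f" "open U" "length is < d" "x \<in> U"
  shows "(dpart is f has_derivative (\<lambda>v. \<Sum>i\<in>UNIV. v $ i * dpart (i # is) f x)) (at x)"
  using has_derivative_of_continuous_partials[OF assms(2,4) Cd_on_differentiable[OF assms(1,3)]]
    Cd_on_continuous_on[OF assms(1), of "_ # is"] assms(3)
  by simp

lemma second_difference_mvt:
  fixes g :: "real^'n::finite \<Rightarrow> real"
  assumes square: "\<And>a b. \<bar>a\<bar> \<le> \<bar>s\<bar> \<Longrightarrow> \<bar>b\<bar> \<le> \<bar>s\<bar> \<Longrightarrow> (x + a *\<^sub>R axis i 1) + b *\<^sub>R axis j 1 \<in> U"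
    and slice: "\<And>y k. y \<in> U \<Longrightarrow> (\<lambda>t. g (y + t *\<^sub>R axis k 1)) differentiable (at 0)"
    and slice': "\<And>y k l. y \<in> U \<Longrightarrow> (\<lambda>t. partial l g (y + t *\<^sub>R axis k 1)) differentiable (at 0)"
  shows "\<exists>a b. \<bar>a\<bar> \<le> \<bar>s\<bar> \<and> \<bar>b\<bar> \<le> \<bar>s\<bar> \<and>
     g ((x + s *\<^sub>R axis j 1) + s *\<^sub>R axis i 1) - g (x + s *\<^sub>R axis i 1) - g (x + s *\<^sub>R axis j 1) + g x
     = s * s * partial j (partial i g) ((x + a *\<^sub>R axis i 1) + b *\<^sub>R axis j 1)"
proof -
  define \<psi> where "\<psi> t = g ((x + s *\<^sub>R axis j 1) + t *\<^sub>R axis i 1) - g (x + t *\<^sub>R axis i 1)" for t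
  have deriv_\<psi>: "(\<psi> has_real_derivative
      partial i g ((x + s *\<^sub>R axis j 1) + t *\<^sub>R axis i 1) - partial i g (x + t *\<^sub>R axis i 1)) (at t)"
    if "\<bar>t\<bar> \<le> \<bar>s\<bar>" for t
    unfolding \<psi>_def
    using square[OF that, of s] square[OF that, of 0]
    by (intro DERIV_diff partial_DERIV_at slice) (auto simp: algebra_simps)
  obtain \<theta> where \<theta>: "0 \<le> \<theta>" "\<theta> \<le> 1" "\<psi> s - \<psi> 0 =
      s * (partial i g ((x + s *\<^sub>R axis j 1) + (\<theta> * s) *\<^sub>R axis i 1) - partial i g (x + (\<theta> * s) *\<^sub>R axis i 1))"
    using mvt_scaled[of s \<psi>, OF deriv_\<psi>] by blast
  define a where "a = \<theta> * s"
  have a: "\<bar>a\<bar> \<le> \<bar>s\<bar>" using \<theta> by (simp add: a_def abs_mult mult_left_le_one_le)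
  define \<eta> where "\<eta> u = partial i g ((x + a *\<^sub>R axis i 1) + u *\<^sub>R axis j 1)" for u
  have deriv_\<eta>: "(\<eta> has_real_derivative partial j (partial i g) ((x + a *\<^sub>R axis i 1) + u *\<^sub>R axis j 1)) (at u)"
    if "\<bar>u\<bar> \<le> \<bar>s\<bar>" for u
    unfolding \<eta>_def by (intro partial_DERIV_at slice' square a that)
  obtain \<theta>' where \<theta>': "0 \<le> \<theta>'" "\<theta>' \<le> 1"
    "\<eta> s - \<eta> 0 = s * partial j (partial i g) ((x + a *\<^sub>R axis i 1) + (\<theta>' * s) *\<^sub>R axis j 1)"
    using mvt_scaled[of s \<eta>, OF deriv_\<eta>] by blast
  define b where "b = \<theta>' * s"
  have b: "\<bar>b\<bar> \<le> \<bar>s\<bar>" using \<theta>' by (simp add: b_def abs_mult mult_left_le_one_le)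
  have swap: "(x + s *\<^sub>R axis j 1) + a *\<^sub>R axis i 1 = (x + a *\<^sub>R axis i 1) + s *\<^sub>R axis j 1"
    by (simp add: algebra_simps)
  have "g ((x + s *\<^sub>R axis j 1) + s *\<^sub>R axis i 1) - g (x + s *\<^sub>R axis i 1) - g (x + s *\<^sub>R axis j 1) + g x
      = s * (\<eta> s - \<eta> 0)"
    using \<theta>(3) by (simp add: \<psi>_def \<eta>_def a_def[symmetric] swap)
  also have "\<dots> = s * s * partial j (partial i g) ((x + a *\<^sub>R axis i 1) + b *\<^sub>R axis j 1)"
    using \<theta>'(3) by (simp add: b_def)
  finally show ?thesis using a b by blast
qed

lemma partial_commute:
  fixes g :: "real^'n::finite \<Rightarrow> real"
  assumes U: "open U" "x \<in> U"
    and slice: "\<And>y k. y \<in> U \<Longrightarrow> (\<lambda>t. g (y + t *\<^sub>R axis k 1)) differentiable (at 0)"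
    and slice': "\<And>y k l. y \<in> U \<Longrightarrow> (\<lambda>t. partial l g (y + t *\<^sub>R axis k 1)) differentiable (at 0)"
    and cont: "\<And>k l. continuous_on U (partial k (partial l g))"
  shows "partial j (partial i g) x = partial i (partial j g) x"
proof (rule ccontr)
  let ?gij = "partial j (partial i g)" and ?gji = "partial i (partial j g)"
  assume "?gij x \<noteq> ?gji x"
  define \<epsilon> where "\<epsilon> = \<bar>?gij x - ?gji x\<bar> / 2"
  have "0 < \<epsilon>" using \<open>?gij x \<noteq> ?gji x\<close> by (simp add: \<epsilon>_def)
  have "\<forall>\<^sub>F y in nhds x. y \<in> U \<and> dist (?gij y) (?gij x) < \<epsilon> \<and> dist (?gji y) (?gji x) < \<epsilon>"
    using eventually_nhds_in_open[OF U] continuous_on_eventually_dist[OF U cont \<open>0 < \<epsilon>\<close>]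
    by (intro eventually_conj) auto
  then obtain \<delta> where \<delta>: "0 < \<delta>"
    "\<And>y. dist y x < \<delta> \<Longrightarrow> y \<in> U \<and> dist (?gij y) (?gij x) < \<epsilon> \<and> dist (?gji y) (?gji x) < \<epsilon>"
    unfolding eventually_nhds_metric by blast
  define s where "s = \<delta> / 4"
  have "0 < s" using \<delta> by (simp add: s_def)
  have near: "dist ((x + a *\<^sub>R axis k 1) + b *\<^sub>R axis l 1) x < \<delta>"
    if "\<bar>a\<bar> \<le> \<bar>s\<bar>" "\<bar>b\<bar> \<le> \<bar>s\<bar>" for a b k l
  proof -
    have "dist ((x + a *\<^sub>R axis k 1) + b *\<^sub>R axis l 1) x = norm (a *\<^sub>R axis k (1::real) + b *\<^sub>R axis l 1)"
      by (simp add: dist_norm)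
    also have "\<dots> \<le> norm (a *\<^sub>R axis k (1::real)) + norm (b *\<^sub>R axis l (1::real))"
      by (rule norm_triangle_ineq)
    also have "\<dots> < \<delta>" using that \<open>0 < s\<close> by (simp add: s_def)
    finally show ?thesis .
  qed
  obtain a1 b1 where ab1: "\<bar>a1\<bar> \<le> \<bar>s\<bar>" "\<bar>b1\<bar> \<le> \<bar>s\<bar>"
    "g ((x + s *\<^sub>R axis j 1) + s *\<^sub>R axis i 1) - g (x + s *\<^sub>R axis i 1) - g (x + s *\<^sub>R axis j 1) + g x
     = s * s * ?gij ((x + a1 *\<^sub>R axis i 1) + b1 *\<^sub>R axis j 1)"
    using second_difference_mvt[of s x i j U g, OF _ slice slice'] \<delta>(2)[OF near] by blast
  obtain a2 b2 where ab2: "\<bar>a2\<bar> \<le> \<bar>s\<bar>" "\<bar>b2\<bar> \<le> \<bar>s\<bar>"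
    "g ((x + s *\<^sub>R axis i 1) + s *\<^sub>R axis j 1) - g (x + s *\<^sub>R axis j 1) - g (x + s *\<^sub>R axis i 1) + g x
     = s * s * ?gji ((x + a2 *\<^sub>R axis j 1) + b2 *\<^sub>R axis i 1)"
    using second_difference_mvt[of s x j i U g, OF _ slice slice'] \<delta>(2)[OF near] by blast
  have "g ((x + s *\<^sub>R axis i 1) + s *\<^sub>R axis j 1) = g ((x + s *\<^sub>R axis j 1) + s *\<^sub>R axis i 1)"
    by (simp add: algebra_simps)
  then have "s * s * ?gij ((x + a1 *\<^sub>R axis i 1) + b1 *\<^sub>R axis j 1)
      = s * s * ?gji ((x + a2 *\<^sub>R axis j 1) + b2 *\<^sub>R axis i 1)"
    using ab1(3) ab2(3) by linarith
  then have "?gij ((x + a1 *\<^sub>R axis i 1) + b1 *\<^sub>R axis j 1) = ?gji ((x + a2 *\<^sub>R axis j 1) + b2 *\<^sub>R axis i 1)"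
    using \<open>0 < s\<close> by simp
  moreover have "dist (?gij ((x + a1 *\<^sub>R axis i 1) + b1 *\<^sub>R axis j 1)) (?gij x) < \<epsilon>"
    "dist (?gji ((x + a2 *\<^sub>R axis j 1) + b2 *\<^sub>R axis i 1)) (?gji x) < \<epsilon>"
    using \<delta>(2)[OF near[OF ab1(1,2)]] \<delta>(2)[OF near[OF ab2(1,2)]] by blast+
  ultimately show False unfolding dist_real_def \<epsilon>_def by argo
qed

lemma dpart_append: "dpart (p @ q) g = dpart p (dpart q g)"
  by (induction p) auto

lemma dpart_cong_open:
  assumes "open U" "\<And>y. y \<in> U \<Longrightarrow> g1 y = g2 y" "x \<in> U"
  shows "dpart p g1 x = dpart p g2 x"
  using assms(3)
proof (induction p arbitrary: x)
  case (Cons i p)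
  obtain r where r: "0 < r" "ball x r \<subseteq> U" using assms(1) Cons.prems open_contains_ball by blast
  have "\<forall>\<^sub>F t in nhds 0. dpart p g1 (x + t *\<^sub>R axis i 1) = dpart p g2 (x + t *\<^sub>R axis i 1)"
    unfolding eventually_nhds_metric
  proof (intro exI[of _ r] conjI allI impI r)
    fix t :: real assume "dist t 0 < r"
    then have "x + t *\<^sub>R axis i 1 \<in> ball x r" by (simp add: dist_norm)
    then show "dpart p g1 (x + t *\<^sub>R axis i 1) = dpart p g2 (x + t *\<^sub>R axis i 1)" using r Cons.IH by blast
  qed
  then show ?case by (simp add: partial_def) (rule deriv_cong_ev, auto)
qed (use assms(2) in simp)

lemma dpart_swap:
  assumes f: "Cd_on d U f" and U: "open U" "x \<in> U" and len: "length (p @ [i, j] @ q) \<le> d"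
  shows "dpart (p @ [i, j] @ q) f x = dpart (p @ [j, i] @ q) f x"
proof -
  have "partial i (partial j (dpart q f)) y = partial j (partial i (dpart q f)) y" if "y \<in> U" for y
    using len
    by (intro partial_commute[OF U(1) that] Cd_on_differentiable[OF f]
        Cd_on_differentiable[OF f, of "_ # q", simplified] Cd_on_continuous_on[OF f, of "_ # _ # q", simplified])
      auto
  then show ?thesis unfolding dpart_append[of p] by (intro dpart_cong_open[OF U(1) _ U(2)]) simp
qed

lemma dpart_move_front:
  assumes f: "Cd_on d U f" and U: "open U" "x \<in> U"
  shows "length (p @ ys @ [a] @ q) \<le> d \<Longrightarrow> dpart (p @ ys @ [a] @ q) f x = dpart (p @ [a] @ ys @ q) f x"
proof (induction ys arbitrary: p)
  case (Cons b ys)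
  have "dpart (p @ (b # ys) @ [a] @ q) f x = dpart ((p @ [b]) @ ys @ [a] @ q) f x" by simp
  also have "\<dots> = dpart ((p @ [b]) @ [a] @ ys @ q) f x" using Cons.prems by (intro Cons.IH) simp
  also have "\<dots> = dpart (p @ [a, b] @ (ys @ q)) f x"
    using Cons.prems by (subst dpart_swap[OF f U, symmetric]) auto
  finally show ?case by simp
qed simp

lemma dpart_mset_eq:
  assumes f: "Cd_on d U f" and U: "open U" "x \<in> U"
  shows "mset xs = mset ys \<Longrightarrow> length (p @ xs) \<le> d \<Longrightarrow> dpart (p @ xs) f x = dpart (p @ ys) f x"
proof (induction xs arbitrary: p ys)
  case (Cons a xs)
  have "a \<in> set ys" using Cons.prems(1) by (metis list.set_intros(1) set_mset_mset)
  then obtain ys1 ys2 where ys: "ys = ys1 @ a # ys2" by (meson split_list)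
  have "length ys = Suc (length xs)" using Cons.prems(1) by (metis length_Cons mset_eq_length)
  then have "dpart (p @ ys) f x = dpart ((p @ [a]) @ ys1 @ ys2) f x"
    using Cons.prems(2) ys dpart_move_front[OF f U, of p ys1 a ys2] by simp
  also have "\<dots> = dpart ((p @ [a]) @ xs) f x"
    using Cons.prems ys by (intro Cons.IH[symmetric]) auto
  finally show ?case by simp
qed simp

section \<open>Taylor's formula in monomial form\<close>

lemma finite_lists_length_eq_UNIV [simp]: "finite {ls :: 'n::finite list. length ls = s}"
  using finite_lists_length_eq[of "UNIV :: 'n set" s] by simp

lemma sum_lists_length_Suc:
  "(\<Sum>ls | length ls = Suc s. F ls) = (\<Sum>i\<in>(UNIV :: 'n::finite set). \<Sum>ls | length ls = s. F (i # ls))"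
proof -
  have "{ls :: 'n list. length ls = Suc s} = (\<lambda>(i, ls). i # ls) ` (UNIV \<times> {ls. length ls = s})"
    by (auto simp: length_Suc_conv image_iff)
  moreover have "inj_on (\<lambda>(i, ls). i # ls) (UNIV \<times> {ls :: 'n list. length ls = s})"
    by (auto simp: inj_on_def)
  ultimately show ?thesis
    by (simp add: sum.reindex sum.cartesian_product case_prod_unfold)
qed

text \<open>The \<open>s\<close>-th derivative of \<open>t \<mapsto> f (x + t h)\<close>.\<close>
definition line_deriv :: "(real^'n::finite \<Rightarrow> real) \<Rightarrow> nat \<Rightarrow> real^'n \<Rightarrow> real^'n \<Rightarrow> real \<Rightarrow> real" where
  "line_deriv f s x h t = (\<Sum>ls | length ls = s. (\<Prod>i\<leftarrow>ls. h $ i) * dpart ls f (x + t *\<^sub>R h))"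

lemma line_deriv_0: "line_deriv f 0 x h = (\<lambda>t. f (x + t *\<^sub>R h))"
  by (auto simp: line_deriv_def)

lemma line_deriv_DERIV:
  fixes h :: "real^'n::finite"
  assumes "Cd_on d U f" "open U" "s < d" "x + t *\<^sub>R h \<in> U"
  shows "(line_deriv f s x h has_real_derivative line_deriv f (Suc s) x h t) (at t)"
proof -
  have "(line_deriv f s x h has_real_derivative
      (\<Sum>ls | length ls = s. (\<Prod>i\<leftarrow>ls. h $ i) * (\<Sum>i\<in>UNIV. h $ i * dpart (i # ls) f (x + t *\<^sub>R h)))) (at t)"
    unfolding line_deriv_def[abs_def]
  proof (intro DERIV_sum DERIV_cmult)
    fix ls :: "'n list" assume "ls \<in> {ls. length ls = s}"
    then show "((\<lambda>t. dpart ls f (x + t *\<^sub>R h)) has_real_derivative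
        (\<Sum>i\<in>UNIV. h $ i * dpart (i # ls) f (x + t *\<^sub>R h))) (at t)"
      using assms by (intro has_real_derivative_along_line Cd_on_has_derivative) auto
  qed
  moreover have "(\<Sum>ls | length ls = s. (\<Prod>i\<leftarrow>ls. h $ i) * (\<Sum>i\<in>UNIV. h $ i * dpart (i # ls) f (x + t *\<^sub>R h)))
      = line_deriv f (Suc s) x h t"
    unfolding line_deriv_def sum_lists_length_Suc
    by (subst sum.swap) (simp add: sum_distrib_left algebra_simps)
  ultimately show ?thesis by simp
qed

lemma taylor_along_line:
  assumes "Cd_on d U f" "open U" "0 < d" "\<And>t. 0 \<le> t \<Longrightarrow> t \<le> 1 \<Longrightarrow> x + t *\<^sub>R h \<in> U"
  obtains \<tau> where "0 < \<tau>" "\<tau> < 1"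
    "f (x + h) = (\<Sum>s<d. line_deriv f s x h 0 / fact s) + line_deriv f d x h \<tau> / fact d"
proof -
  have "\<exists>\<tau>. 0 < \<tau> \<and> \<tau> < 1 \<and> line_deriv f 0 x h 1 =
      (\<Sum>s<d. line_deriv f s x h 0 / fact s * 1 ^ s) + line_deriv f d x h \<tau> / fact d * 1 ^ d"
  proof (rule Maclaurin[of 1 d "\<lambda>s. line_deriv f s x h"])
    show "\<forall>s t. s < d \<and> 0 \<le> t \<and> t \<le> 1 \<longrightarrow>
        (line_deriv f s x h has_real_derivative line_deriv f (Suc s) x h t) (at t)"
      using line_deriv_DERIV[OF assms(1,2)] assms(4) by blast
  qed (use assms(3) in auto)
  then show ?thesis using that by (auto simp: line_deriv_0)
qed

definition mindex_of :: "'n list \<Rightarrow> ('n \<Rightarrow> nat)" where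
  "mindex_of ls = count (mset ls)"

text \<open>By symmetry of mixed partials this is the usual Taylor coefficient \<open>\<partial>\<^sup>j f x / j!\<close>.\<close>
definition taylor_coeff :: "(real^'n::finite \<Rightarrow> real) \<Rightarrow> real^'n \<Rightarrow> ('n \<Rightarrow> nat) \<Rightarrow> real" where
  "taylor_coeff f x j = (\<Sum>ls | mindex_of ls = j. dpart ls f x) / fact (sum j UNIV)"

lemma mindex_of_Cons: "mindex_of (a # ls) = (\<lambda>i. mindex_of ls i + (if i = a then 1 else 0))"
  by (auto simp: mindex_of_def)

lemma sum_mindex_of [simp]: "sum (mindex_of ls) (UNIV :: 'n::finite set) = length ls"
  by (induction ls) (simp_all add: mindex_of_Cons sum.distrib, simp add: mindex_of_def)

lemma finite_mindex_of_eq [simp]: "finite {ls :: 'n::finite list. mindex_of ls = j}"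
  by (rule finite_subset[of _ "{ls. length ls = sum j UNIV}"]) auto

lemma prod_list_eq_monomial: "(\<Prod>i\<leftarrow>ls. h $ i) = monomial h (mindex_of ls)"
proof (induction ls)
  case (Cons a ls)
  have "monomial h (mindex_of (a # ls)) = monomial h (mindex_of ls) * (\<Prod>i\<in>UNIV. h $ i ^ (if i = a then 1 else 0))"
    unfolding monomial_def mindex_of_Cons power_add prod.distrib ..
  also have "(\<Prod>i\<in>UNIV. h $ i ^ (if i = a then 1 else 0)) = h $ a"
    by (simp add: if_distrib prod.delta cong: if_cong)
  finally show ?case using Cons by simp
qed (simp add: monomial_def mindex_of_def)

lemma taylor_poly_monomial_form:
  fixes f :: "real^'n::finite \<Rightarrow> real"
  shows "(\<Sum>s\<le>d. line_deriv f s x h 0 / fact s) = (\<Sum>j\<in>mindex d. taylor_coeff f x j * monomial h j)"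
proof -
  let ?F = "\<lambda>ls. monomial h (mindex_of ls) * dpart ls f x / fact (length ls)"
  let ?L = "{ls :: 'n list. length ls \<le> d}"
  have "(\<Sum>s\<le>d. line_deriv f s x h 0 / fact s) = (\<Sum>s\<le>d. \<Sum>ls | length ls = s. ?F ls)"
    by (auto simp: line_deriv_def sum_divide_distrib prod_list_eq_monomial intro!: sum.cong)
  also have "\<dots> = sum ?F (\<Union>s\<le>d. {ls. length ls = s})"
    by (intro sum.UNION_disjoint[symmetric]) auto
  also have "(\<Union>s\<le>d. {ls :: 'n list. length ls = s}) = ?L" by auto
  also have "sum ?F ?L = (\<Sum>j\<in>mindex d. \<Sum>ls | ls \<in> ?L \<and> mindex_of ls = j. ?F ls)"
    using finite_lists_length_le[of "UNIV :: 'n set" d] finite_mindex[of d, where 'n='n]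
    by (intro sum.group[symmetric]) (auto simp: mindex_def)
  also have "\<dots> = (\<Sum>j\<in>mindex d. taylor_coeff f x j * monomial h j)"
  proof (rule sum.cong[OF refl])
    fix j :: "'n \<Rightarrow> nat" assume "j \<in> mindex d"
    then have "{ls. ls \<in> ?L \<and> mindex_of ls = j} = {ls. mindex_of ls = j}"
      by (auto simp: mindex_def)
    then have "(\<Sum>ls | ls \<in> ?L \<and> mindex_of ls = j. ?F ls)
        = (\<Sum>ls | mindex_of ls = j. monomial h j * (dpart ls f x / fact (sum j UNIV)))"
      by (auto intro!: sum.cong)
    then show "(\<Sum>ls | ls \<in> ?L \<and> mindex_of ls = j. ?F ls) = taylor_coeff f x j * monomial h j"
      by (simp add: taylor_coeff_def sum_divide_distrib sum_distrib_left mult.commute)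
  qed
  finally show ?thesis .
qed

lemma taylor_monomial_form:
  assumes "Cd_on d U f" "open U" "0 < d" "\<And>t. 0 \<le> t \<Longrightarrow> t \<le> 1 \<Longrightarrow> x + t *\<^sub>R h \<in> U"
  obtains \<tau> where "0 \<le> \<tau>" "\<tau> \<le> 1" "f (x + h) = (\<Sum>j\<in>mindex d. taylor_coeff f x j * monomial h j)
      + (line_deriv f d x h \<tau> - line_deriv f d x h 0) / fact d"
proof -
  obtain \<tau> where \<tau>: "0 < \<tau>" "\<tau> < 1"
    "f (x + h) = (\<Sum>s<d. line_deriv f s x h 0 / fact s) + line_deriv f d x h \<tau> / fact d"
    using taylor_along_line[OF assms] .
  have "(\<Sum>s\<le>d. line_deriv f s x h 0 / fact s) = (\<Sum>s<d. line_deriv f s x h 0 / fact s) + line_deriv f d x h 0 / fact d"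
    by (simp add: lessThan_Suc_atMost[symmetric])
  then show ?thesis
    using that[of \<tau>] \<tau> by (simp add: taylor_poly_monomial_form diff_divide_distrib)
qed

lemma abs_monomial_le:
  fixes h :: "real^'n::finite"
  assumes "\<And>i. \<bar>h $ i\<bar> \<le> r"
  shows "\<bar>monomial h j\<bar> \<le> r ^ sum j UNIV"
proof -
  have "\<bar>monomial h j\<bar> = (\<Prod>i\<in>UNIV. \<bar>h $ i\<bar> ^ j i)" by (simp add: monomial_def abs_prod power_abs)
  also have "\<dots> \<le> (\<Prod>i\<in>UNIV. r ^ j i)" by (intro prod_mono conjI power_mono assms) auto
  also have "\<dots> = r ^ sum j UNIV" by (simp add: power_sum)
  finally show ?thesis .
qed

lemma line_deriv_diff_bound:
  fixes h :: "real^'n::finite"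
  assumes "\<And>i. \<bar>h $ i\<bar> \<le> r"
  shows "\<bar>line_deriv f s x h t - line_deriv f s x h 0\<bar>
    \<le> r ^ s * (\<Sum>ls | length ls = s. \<bar>dpart ls f (x + t *\<^sub>R h) - dpart ls f x\<bar>)"
proof -
  have "\<bar>line_deriv f s x h t - line_deriv f s x h 0\<bar>
      = \<bar>\<Sum>ls | length ls = s. (\<Prod>i\<leftarrow>ls. h $ i) * (dpart ls f (x + t *\<^sub>R h) - dpart ls f x)\<bar>"
    by (simp add: line_deriv_def sum_subtractf[symmetric] algebra_simps)
  also have "\<dots> \<le> (\<Sum>ls | length ls = s. \<bar>(\<Prod>i\<leftarrow>ls. h $ i)\<bar> * \<bar>dpart ls f (x + t *\<^sub>R h) - dpart ls f x\<bar>)"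
    by (rule order_trans[OF sum_abs]) (simp add: abs_mult)
  also have "\<dots> \<le> (\<Sum>ls | length ls = s. r ^ s * \<bar>dpart ls f (x + t *\<^sub>R h) - dpart ls f x\<bar>)"
  proof -
    have "\<bar>\<Prod>i\<leftarrow>ls. h $ i\<bar> \<le> r ^ length ls" for ls
      using abs_monomial_le[OF assms, of "mindex_of ls"] by (simp add: prod_list_eq_monomial)
    then show ?thesis by (intro sum_mono mult_right_mono) auto
  qed
  finally show ?thesis by (simp add: sum_distrib_left)
qed

lemma taylor_remainder_bound:
  fixes h :: "real^'n::finite"
  assumes "Cd_on d U f" "open U" "0 < d" "\<And>t. 0 \<le> t \<Longrightarrow> t \<le> 1 \<Longrightarrow> x + t *\<^sub>R h \<in> U" "norm h \<le> r"
  obtains \<tau> where "0 \<le> \<tau>" "\<tau> \<le> 1"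
    "\<bar>f (x + h) - (\<Sum>j\<in>mindex d. taylor_coeff f x j * monomial h j)\<bar>
      \<le> r ^ d * (\<Sum>ls | length ls = d. \<bar>dpart ls f (x + \<tau> *\<^sub>R h) - dpart ls f x\<bar>) / fact d"
proof -
  obtain \<tau> where \<tau>: "0 \<le> \<tau>" "\<tau> \<le> 1" and taylor: "f (x + h) = (\<Sum>j\<in>mindex d. taylor_coeff f x j * monomial h j)
      + (line_deriv f d x h \<tau> - line_deriv f d x h 0) / fact d"
    using taylor_monomial_form[OF assms(1-4)] by blast
  have "\<bar>line_deriv f d x h \<tau> - line_deriv f d x h 0\<bar>
      \<le> r ^ d * (\<Sum>ls | length ls = d. \<bar>dpart ls f (x + \<tau> *\<^sub>R h) - dpart ls f x\<bar>)"
    by (intro line_deriv_diff_bound order_trans[OF component_le_norm_cart assms(5)])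
  then have "\<bar>f (x + h) - (\<Sum>j\<in>mindex d. taylor_coeff f x j * monomial h j)\<bar>
      \<le> r ^ d * (\<Sum>ls | length ls = d. \<bar>dpart ls f (x + \<tau> *\<^sub>R h) - dpart ls f x\<bar>) / fact d"
    unfolding taylor by (simp add: divide_right_mono)
  with \<tau> show ?thesis by (rule that)
qed

lemma taylor_coeff_mindex_of:
  assumes "Cd_on d U f" "open U" "x \<in> U" "length is \<le> d"
  shows "taylor_coeff f x (mindex_of is) = card {ls. mindex_of ls = mindex_of is} * dpart is f x / fact (length is)"
proof -
  have "(\<Sum>ls | mindex_of ls = mindex_of is. dpart ls f x) = (\<Sum>ls | mindex_of ls = mindex_of is. dpart is f x)"
  proof (rule sum.cong[OF refl])
    fix ls assume "ls \<in> {ls. mindex_of ls = mindex_of is}"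
    then have "mset ls = mset is" by (simp add: mindex_of_def multiset_eqI)
    then show "dpart ls f x = dpart is f x" using dpart_mset_eq[OF assms(1-3), of "is" ls "[]"] assms(4) by simp
  qed
  then show ?thesis by (simp add: taylor_coeff_def)
qed

lemma dpart_eq_0_if_taylor_coeff_eq_0:
  assumes "Cd_on d U f" "open U" "x \<in> U" "length is \<le> d" "taylor_coeff f x (mindex_of is) = 0"
  shows "dpart is f x = 0"
proof -
  have "0 < card {ls. mindex_of ls = mindex_of is}" by (subst card_gt_0_iff) auto
  moreover have "card {ls. mindex_of ls = mindex_of is} * dpart is f x / fact (length is) = 0"
    using assms(5) taylor_coeff_mindex_of[OF assms(1-4)] by simp
  ultimately show ?thesis by auto
qed

lemma taylor_coeff_tendsto:
  assumes "Cd_on d U f" "open U" "y \<in> U" "sum j UNIV \<le> d" "x \<longlonglongrightarrow> y"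
  shows "(\<lambda>k. taylor_coeff f (x k) j) \<longlonglongrightarrow> taylor_coeff f y j"
proof -
  have "(\<lambda>k. dpart ls f (x k)) \<longlonglongrightarrow> dpart ls f y" if "mindex_of ls = j" for ls
  proof -
    have "length ls \<le> d" using that assms(4) by (metis sum_mindex_of)
    then have "isCont (dpart ls f) y"
      using Cd_on_continuous_on[OF assms(1)] assms(2,3) continuous_on_eq_continuous_at by blast
    then show ?thesis using assms(5) isCont_tendsto_compose by blast
  qed
  then show ?thesis unfolding taylor_coeff_def by (intro tendsto_intros) auto
qed

lemma flat_at0_if_taylor_coeff_eq_0:
  fixes f :: "real^'n::finite \<Rightarrow> real" and m :: real
  assumes "Cd_on d U f" "open U" "0 \<in> U" "m \<le> d"
    and "\<And>j. j \<in> mindex d \<Longrightarrow> real (sum j UNIV) \<le> m \<Longrightarrow> taylor_coeff f 0 j = 0"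
  shows "flat_at0 \<lfloor>m\<rfloor> f"
  unfolding flat_at0_def
proof (intro allI impI)
  fix q :: "'n list" assume "int (length q) \<le> \<lfloor>m\<rfloor>"
  then have "real (length q) \<le> m" by (simp add: le_floor_iff)
  then show "dpart q f 0 = 0"
    using assms(4) by (intro dpart_eq_0_if_taylor_coeff_eq_0[OF assms(1-3)] assms(5)) (auto simp: mindex_def)
qed

section \<open>Vandermonde determinants\<close>

definition vandermonde :: "nat \<Rightarrow> (nat \<Rightarrow> real^'n::finite) \<Rightarrow> real mat" where
  "vandermonde d a = mat (Ncount CARD('n) (int d)) (Ncount CARD('n) (int d)) (\<lambda>(i, l). monomial (a i) (menum d l))"

lemma vdet_eq_det: "vdet d a = det (vandermonde d a)"
  unfolding vdet_def det_def Let_def vandermonde_def by (simp add: atLeast0LessThan)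

lemma vandermonde_carrier:
  "vandermonde d (a :: nat \<Rightarrow> real^'n::finite) \<in> carrier_mat (Ncount CARD('n) (int d)) (Ncount CARD('n) (int d))"
  by (simp add: vandermonde_def)

lemma sum_menum:
  "(\<Sum>l<Ncount CARD('n) (int d). F (menum d l)) = (\<Sum>j\<in>(mindex d :: ('n::finite \<Rightarrow> nat) set). F j)"
  using sum.reindex_bij_betw[OF bij_betw_menum, of F] by simp

lemma prod_menum:
  "(\<Prod>l<Ncount CARD('n) (int d). F (menum d l)) = (\<Prod>j\<in>(mindex d :: ('n::finite \<Rightarrow> nat) set). F j)"
  using prod.reindex_bij_betw[OF bij_betw_menum, of F] by simp

lemma abs_det_le_fact_prod:
  fixes A :: "real mat"
  assumes A: "A \<in> carrier_mat n n" and bound: "\<And>i l. i < n \<Longrightarrow> l < n \<Longrightarrow> \<bar>A $$ (i, l)\<bar> \<le> g l"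
  shows "\<bar>det A\<bar> \<le> fact n * (\<Prod>l<n. g l)"
proof -
  have term_bound: "\<bar>signof p * (\<Prod>i = 0..<n. A $$ (i, p i))\<bar> \<le> (\<Prod>l<n. g l)" if p: "p permutes {0..<n}" for p
  proof -
    have "\<bar>signof p * (\<Prod>i = 0..<n. A $$ (i, p i))\<bar> = (\<Prod>i = 0..<n. \<bar>A $$ (i, p i)\<bar>)"
      by (simp add: abs_mult abs_prod sign_def)
    also have "\<dots> \<le> (\<Prod>i = 0..<n. g (p i))"
      using p bound by (intro prod_mono) (auto simp: permutes_in_image)
    also have "\<dots> = (\<Prod>l<n. g l)"
      using prod.permute[OF p, of g] by (simp add: comp_def atLeast0LessThan)
    finally show ?thesis .
  qed
  have "\<bar>det A\<bar> \<le> (\<Sum>p | p permutes {0..<n}. \<bar>signof p * (\<Prod>i = 0..<n. A $$ (i, p i))\<bar>)"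
    using A by (simp add: det_def sum_abs)
  also have "\<dots> \<le> (\<Sum>p | p permutes {0..<n}. (\<Prod>l<n. g l))"
    using term_bound by (intro sum_mono) auto
  also have "\<dots> = fact n * (\<Prod>l<n. g l)"
    by (simp add: card_permutations)
  finally show ?thesis .
qed

lemma abs_det_vandermonde_le:
  fixes b :: "nat \<Rightarrow> real^'n::finite"
  assumes "\<And>i t. i < Ncount CARD('n) (int d) \<Longrightarrow> \<bar>b i $ t\<bar> \<le> r"
  shows "\<bar>det (vandermonde d b)\<bar> \<le> fact (Ncount CARD('n) (int d)) * r ^ (\<Sum>j\<in>(mindex d :: ('n \<Rightarrow> nat) set). sum j UNIV)"
proof -
  have "\<bar>det (vandermonde d b)\<bar>
      \<le> fact (Ncount CARD('n) (int d)) * (\<Prod>l<Ncount CARD('n) (int d). r ^ sum (menum d l :: 'n \<Rightarrow> nat) UNIV)"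
    using assms by (intro abs_det_le_fact_prod[OF vandermonde_carrier]) (simp add: vandermonde_def abs_monomial_le)
  also have "(\<Prod>l<Ncount CARD('n) (int d). r ^ sum (menum d l :: 'n \<Rightarrow> nat) UNIV)
      = (\<Prod>j\<in>(mindex d :: ('n \<Rightarrow> nat) set). r ^ sum j UNIV)"
    by (rule prod_menum)
  also have "\<dots> = r ^ (\<Sum>j\<in>(mindex d :: ('n \<Rightarrow> nat) set). sum j UNIV)"
    by (rule power_sum[symmetric])
  finally show ?thesis .
qed

text \<open>Cramer's rule for the system \<open>V(b) C = (P(b\<^sub>i))\<^sub>i\<close>: replacing column \<open>j\<close> of \<open>V(b)\<close>, whose
  entries are at most \<open>r\<^bsup>|j|\<^esup>\<close>, by the right-hand side trades the factor \<open>r\<^bsup>|j|\<^esup>\<close> for \<open>Y\<close>.\<close>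
lemma cramer_coeff_bound:
  fixes b :: "nat \<Rightarrow> real^'n::finite" and C :: "('n \<Rightarrow> nat) \<Rightarrow> real" and d :: nat
  defines "M \<equiv> Ncount CARD('n) (int d)"
  assumes b: "\<And>i t. i < M \<Longrightarrow> \<bar>b i $ t\<bar> \<le> r"
    and Y: "\<And>i. i < M \<Longrightarrow> \<bar>\<Sum>j\<in>mindex d. C j * monomial (b i) j\<bar> \<le> Y"
    and j: "j \<in> mindex d"
  shows "\<bar>C j\<bar> * \<bar>det (vandermonde d b)\<bar> * r ^ sum j UNIV
     \<le> fact M * Y * r ^ (\<Sum>j\<in>(mindex d :: ('n \<Rightarrow> nat) set). sum j UNIV)"
proof -
  obtain l where l: "l < M" "menum d l = j"
    using j bij_betw_menum[of d, where 'n='n] unfolding M_def bij_betw_def by (metis imageE lessThan_iff)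
  define A where "A = vandermonde d b"
  define v where "v = Matrix.vec M (\<lambda>l. C (menum d l))"
  have A: "A \<in> carrier_mat M M" unfolding A_def M_def by (rule vandermonde_carrier)
  have Av: "(A *\<^sub>v v) $ i = (\<Sum>j\<in>mindex d. C j * monomial (b i) j)" if "i < M" for i
  proof -
    have "(A *\<^sub>v v) $ i = (\<Sum>k<M. C (menum d k) * monomial (b i) (menum d k))"
      using that A by (auto simp: scalar_prod_def v_def A_def vandermonde_def M_def atLeast0LessThan
          intro!: sum.cong)
    then show ?thesis unfolding M_def by (simp add: sum_menum[where F="\<lambda>j. C j * monomial (b i) j"])
  qed
  have "0 \<le> r" by (rule order_trans[OF abs_ge_zero b[OF l(1)]])
  define g where "g l' = (if l' = l then Y else r ^ sum (menum d l' :: 'n \<Rightarrow> nat) UNIV)" for l'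
  have "\<bar>C j\<bar> * \<bar>det A\<bar> = \<bar>det (replace_col A (A *\<^sub>v v) l)\<bar>"
    using cramer_lemma_mat[OF A _ l(1), of v] l by (simp add: v_def abs_mult)
  also have "\<dots> \<le> fact M * (\<Prod>l'<M. g l')"
  proof (rule abs_det_le_fact_prod)
    show "replace_col A (A *\<^sub>v v) l \<in> carrier_mat M M" using A by (simp add: replace_col_def)
    fix i l' assume i: "i < M" and l': "l' < M"
    show "\<bar>replace_col A (A *\<^sub>v v) l $$ (i, l')\<bar> \<le> g l'"
    proof (cases "l' = l")
      case True
      then show ?thesis using i l' A Av[OF i] Y[OF i] by (simp add: replace_col_def g_def)
    next
      case False
      have "\<bar>A $$ (i, l')\<bar> \<le> r ^ sum (menum d l' :: 'n \<Rightarrow> nat) UNIV"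
        using i l' b[OF i] by (simp add: A_def vandermonde_def M_def abs_monomial_le)
      then show ?thesis using i l' A False by (simp add: replace_col_def g_def)
    qed
  qed
  also have "(\<Prod>l'<M. g l') = Y * (\<Prod>l'\<in>{..<M} - {l}. r ^ sum (menum d l' :: 'n \<Rightarrow> nat) UNIV)"
    using l by (simp add: prod.remove[of "{..<M}" l] g_def)
  finally have "\<bar>C j\<bar> * \<bar>det A\<bar> \<le> fact M * (Y * (\<Prod>l'\<in>{..<M} - {l}. r ^ sum (menum d l' :: 'n \<Rightarrow> nat) UNIV))" .
  from mult_right_mono[OF this zero_le_power[OF \<open>0 \<le> r\<close>, of "sum j UNIV"]] l(2)
  have "\<bar>C j\<bar> * \<bar>det A\<bar> * r ^ sum j UNIV
      \<le> fact M * Y * ((\<Prod>l'\<in>{..<M} - {l}. r ^ sum (menum d l' :: 'n \<Rightarrow> nat) UNIV) * r ^ sum j UNIV)"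
    by (simp add: mult.assoc)
  also have "(\<Prod>l'\<in>{..<M} - {l}. r ^ sum (menum d l' :: 'n \<Rightarrow> nat) UNIV) * r ^ sum j UNIV
      = (\<Prod>l'<M. r ^ sum (menum d l' :: 'n \<Rightarrow> nat) UNIV)"
    using l by (simp add: prod.remove[of "{..<M}" l] mult.commute)
  also have "\<dots> = (\<Prod>j\<in>(mindex d :: ('n \<Rightarrow> nat) set). r ^ sum j UNIV)"
    unfolding M_def by (rule prod_menum)
  also have "\<dots> = r ^ (\<Sum>j\<in>(mindex d :: ('n \<Rightarrow> nat) set). sum j UNIV)"
    by (rule power_sum[symmetric])
  finally show ?thesis by (simp add: A_def)
qed

definition translation_coeff :: "real^'n::finite \<Rightarrow> ('n \<Rightarrow> nat) \<Rightarrow> ('n \<Rightarrow> nat) \<Rightarrow> real" where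
  "translation_coeff x j j' = (\<Prod>i\<in>UNIV. of_nat (j' i choose j i) * (x $ i) ^ (j' i - j i))"

lemma monomial_add_expand:
  fixes b x :: "real^'n::finite"
  assumes j': "j' \<in> mindex d"
  shows "monomial (b + x) j' = (\<Sum>j\<in>mindex d. monomial b j * translation_coeff x j j')"
proof -
  let ?F = "\<lambda>i k. of_nat (j' i choose k) * (b $ i) ^ k * (x $ i) ^ (j' i - k)"
  have "monomial (b + x) j' = (\<Prod>i\<in>UNIV. \<Sum>k\<le>j' i. ?F i k)"
    unfolding monomial_def by (simp add: binomial_ring)
  also have "\<dots> = (\<Sum>g\<in>PiE UNIV (\<lambda>i. {..j' i}). \<Prod>i\<in>UNIV. ?F i (g i))"
    by (rule prod_sum_PiE) auto
  also have "PiE UNIV (\<lambda>i. {..j' i}) = {j. \<forall>i. j i \<le> j' i}"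
    by (auto simp: PiE_UNIV_domain)
  also have "(\<Sum>g\<in>{j. \<forall>i. j i \<le> j' i}. \<Prod>i\<in>UNIV. ?F i (g i))
      = (\<Sum>j\<in>{j. \<forall>i. j i \<le> j' i}. monomial b j * translation_coeff x j j')"
  proof (rule sum.cong[OF refl])
    fix j :: "'n \<Rightarrow> nat"
    show "(\<Prod>i\<in>UNIV. ?F i (j i)) = monomial b j * translation_coeff x j j'"
      unfolding monomial_def translation_coeff_def prod.distrib[symmetric]
      by (rule prod.cong) (simp_all add: mult_ac)
  qed
  also have "\<dots> = (\<Sum>j\<in>mindex d. monomial b j * translation_coeff x j j')"
  proof (rule sum.mono_neutral_left)
    show "{j. \<forall>i. j i \<le> j' i} \<subseteq> mindex d"
    proof
      fix j assume "j \<in> {j. \<forall>i. j i \<le> j' i}"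
      then have "sum j UNIV \<le> sum j' UNIV" by (intro sum_mono) auto
      then show "j \<in> mindex d" using j' by (simp add: mindex_def)
    qed
    show "\<forall>j\<in>mindex d - {j. \<forall>i. j i \<le> j' i}. monomial b j * translation_coeff x j j' = 0"
    proof
      fix j assume "j \<in> mindex d - {j. \<forall>i. j i \<le> j' i}"
      then obtain i where "j' i < j i" by (auto simp: not_le)
      then have "translation_coeff x j j' = 0"
        unfolding translation_coeff_def by (intro prod_zero) (auto intro!: bexI[of _ i])
      then show "monomial b j * translation_coeff x j j' = 0" by simp
    qed
  qed simp
  finally show ?thesis .
qed

definition translation_matrix :: "nat \<Rightarrow> real^'n::finite \<Rightarrow> real mat" where
  "translation_matrix d x = mat (Ncount CARD('n) (int d)) (Ncount CARD('n) (int d))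
     (\<lambda>(l, l'). translation_coeff x (menum d l) (menum d l'))"

lemma vandermonde_translate:
  fixes a :: "nat \<Rightarrow> real^'n::finite"
  shows "vandermonde d a = vandermonde d (\<lambda>i. a i - x) * translation_matrix d x"
proof (rule eq_matI)
  let ?M = "Ncount CARD('n) (int d)"
  fix i l' assume "i < dim_row (vandermonde d (\<lambda>i. a i - x) * translation_matrix d x)"
    "l' < dim_col (vandermonde d (\<lambda>i. a i - x) * translation_matrix d x)"
  then have i: "i < ?M" and l': "l' < ?M" by (auto simp: vandermonde_def translation_matrix_def)
  have "(vandermonde d (\<lambda>i. a i - x) * translation_matrix d x) $$ (i, l')
      = (\<Sum>l<?M. monomial (a i - x) (menum d l) * translation_coeff x (menum d l) (menum d l'))"
    using i l' by (simp add: vandermonde_def translation_matrix_def scalar_prod_def atLeast0LessThan)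
  also have "\<dots> = (\<Sum>j\<in>mindex d. monomial (a i - x) j * translation_coeff x j (menum d l'))"
    by (rule sum_menum[where F="\<lambda>j. monomial (a i - x) j * translation_coeff x j (menum d l')"])
  also have "\<dots> = monomial ((a i - x) + x) (menum d l')"
    using bij_betw_menum[of d, where 'n='n] l' by (intro monomial_add_expand[symmetric]) (auto simp: bij_betw_def)
  also have "\<dots> = vandermonde d a $$ (i, l')" using i l' by (simp add: vandermonde_def)
  finally show "vandermonde d a $$ (i, l') = (vandermonde d (\<lambda>i. a i - x) * translation_matrix d x) $$ (i, l')"
    by simp
qed (simp_all add: vandermonde_def translation_matrix_def)

lemma vdet_translate:
  fixes a :: "nat \<Rightarrow> real^'n::finite"
  shows "vdet d a = det (vandermonde d (\<lambda>i. a i - x)) * det (translation_matrix d x)"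
  unfolding vdet_eq_det
  by (subst vandermonde_translate[of d a x]) (rule det_mult[OF vandermonde_carrier], simp add: translation_matrix_def)

lemma det_translation_matrix_tendsto:
  fixes x :: "nat \<Rightarrow> real^'n::finite"
  assumes "x \<longlonglongrightarrow> y"
  shows "(\<lambda>k. det (translation_matrix d (x k))) \<longlonglongrightarrow> det (translation_matrix d y)"
proof -
  let ?M = "Ncount CARD('n) (int d)"
  have "det (translation_matrix d z) = (\<Sum>p | p permutes {0..<?M}.
      signof p * (\<Prod>i = 0..<?M. translation_coeff z (menum d i) (menum d (p i))))" for z :: "real^'n"
    unfolding det_def by (auto simp: translation_matrix_def permutes_in_image intro!: sum.cong prod.cong)
  moreover have "(\<lambda>k. translation_coeff (x k) j j') \<longlonglongrightarrow> translation_coeff y j j'" for j j'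
    unfolding translation_coeff_def by (intro tendsto_intros assms)
  ultimately show ?thesis by (simp only:) (intro tendsto_intros)
qed

section \<open>Flatness from small values on shrinking point sets\<close>

lemma taylor_remainder_vanishes:
  fixes x :: "nat \<Rightarrow> real^'n::finite" and h :: "nat \<Rightarrow> 'i \<Rightarrow> real^'n"
  assumes f: "Cd_on d U f" and U: "open U" "0 \<in> U" and "0 < d" "finite I"
    and x: "x \<longlonglongrightarrow> 0" and r: "r \<longlonglongrightarrow> 0" and h: "\<And>k i. i \<in> I \<Longrightarrow> norm (h k i) \<le> r k"
  obtains E where "E \<longlonglongrightarrow> 0" "\<forall>k. 0 \<le> E k"
    "\<forall>\<^sub>F k in sequentially. \<forall>i\<in>I.
       \<bar>f (x k + h k i) - (\<Sum>j\<in>mindex d. taylor_coeff f (x k) j * monomial (h k i) j)\<bar> \<le> r k ^ d * E k"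
proof -
  let ?P = "\<lambda>k i. \<Sum>j\<in>mindex d. taylor_coeff f (x k) j * monomial (h k i) j"
  let ?osc = "\<lambda>k i \<tau>. \<Sum>ls | length ls = d. \<bar>dpart ls f (x k + \<tau> *\<^sub>R h k i) - dpart ls f (x k)\<bar>"
  let ?segment_in_U = "\<lambda>k i. \<forall>t. 0 \<le> t \<longrightarrow> t \<le> 1 \<longrightarrow> x k + t *\<^sub>R h k i \<in> U"
  let ?taylor = "\<lambda>k i \<tau>. 0 \<le> \<tau> \<and> \<tau> \<le> 1 \<and> (i \<in> I \<and> ?segment_in_U k i \<longrightarrow>
      \<bar>f (x k + h k i) - ?P k i\<bar> \<le> r k ^ d * ?osc k i \<tau> / fact d)"
  have taylor_ex: "\<exists>\<tau>. ?taylor k i \<tau>" for k i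
  proof (cases "i \<in> I \<and> ?segment_in_U k i")
    case True
    then have "\<And>t. 0 \<le> t \<Longrightarrow> t \<le> 1 \<Longrightarrow> x k + t *\<^sub>R h k i \<in> U" "norm (h k i) \<le> r k"
      using h by auto
    from taylor_remainder_bound[OF f U(1) \<open>0 < d\<close> this] obtain \<tau> where "0 \<le> \<tau>" "\<tau> \<le> 1"
      "\<bar>f (x k + h k i) - ?P k i\<bar> \<le> r k ^ d * ?osc k i \<tau> / fact d" .
    then show ?thesis by blast
  next
    case False
    then show ?thesis by (intro exI[of _ 0] conjI) auto
  qed
  define \<tau> where "\<tau> k i = (SOME \<tau>. ?taylor k i \<tau>)" for k i
  have \<tau>: "?taylor k i (\<tau> k i)" for k i
    unfolding \<tau>_def by (rule someI_ex[OF taylor_ex])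
  have segment_norm: "norm (x k + t *\<^sub>R h k i) \<le> norm (x k) + r k" if "i \<in> I" "0 \<le> t" "t \<le> 1" for k i t
  proof -
    have "norm (t *\<^sub>R h k i) \<le> 1 * r k" using mult_mono[OF that(3) h[OF that(1)]] that(2) by simp
    then show ?thesis using norm_triangle_ineq[of "x k" "t *\<^sub>R h k i"] by simp
  qed
  have xr: "(\<lambda>k. norm (x k) + r k) \<longlonglongrightarrow> 0" using tendsto_add[OF tendsto_norm_zero[OF x] r] by simp
  define E where "E k = (\<Sum>i\<in>I. ?osc k i (\<tau> k i)) / fact d" for k
  show thesis
  proof
    have "(\<lambda>k. \<bar>dpart ls f (x k + \<tau> k i *\<^sub>R h k i) - dpart ls f (x k)\<bar>) \<longlonglongrightarrow> \<bar>dpart ls f 0 - dpart ls f 0\<bar>"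
      if "i \<in> I" "length ls = d" for i ls
    proof -
      have "isCont (dpart ls f) 0"
        using Cd_on_continuous_on[OF f] U that(2) continuous_on_eq_continuous_at by blast
      moreover have "(\<lambda>k. x k + \<tau> k i *\<^sub>R h k i) \<longlonglongrightarrow> 0"
        by (rule Lim_null_comparison[OF _ xr]) (use segment_norm[OF that(1)] \<tau> in auto)
      ultimately show ?thesis using x by (intro tendsto_intros) (auto intro: isCont_tendsto_compose)
    qed
    then have "E \<longlonglongrightarrow> (\<Sum>i\<in>I. \<Sum>ls | length ls = d. \<bar>dpart ls f 0 - dpart ls f 0\<bar>) / fact d"
      unfolding E_def by (intro tendsto_divide tendsto_sum tendsto_const) auto
    then show "E \<longlonglongrightarrow> 0" by simp
  next
    show "\<forall>k. 0 \<le> E k" by (simp add: E_def sum_nonneg)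
  next
    obtain \<delta> where \<delta>: "0 < \<delta>" "ball 0 \<delta> \<subseteq> U" using U open_contains_ball by blast
    show "\<forall>\<^sub>F k in sequentially. \<forall>i\<in>I. \<bar>f (x k + h k i) - ?P k i\<bar> \<le> r k ^ d * E k"
      using order_tendstoD(2)[OF xr \<delta>(1)]
    proof (eventually_elim, intro ballI)
      fix k i assume small: "norm (x k) + r k < \<delta>" and "i \<in> I"
      have "?segment_in_U k i"
      proof (intro allI impI)
        fix t :: real assume "0 \<le> t" "t \<le> 1"
        then have "norm (x k + t *\<^sub>R h k i) < \<delta>" using segment_norm[OF \<open>i \<in> I\<close>, of t k] small by simp
        then show "x k + t *\<^sub>R h k i \<in> U" using \<delta>(2) by (auto simp: mem_ball_0)
      qed
      then have "\<bar>f (x k + h k i) - ?P k i\<bar> \<le> r k ^ d * ?osc k i (\<tau> k i) / fact d"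
        using \<tau>[of k i] \<open>i \<in> I\<close> by blast
      also have "\<dots> \<le> r k ^ d * E k"
      proof -
        have "?osc k i (\<tau> k i) \<le> (\<Sum>i\<in>I. ?osc k i (\<tau> k i))"
          using \<open>finite I\<close> \<open>i \<in> I\<close> by (intro member_le_sum sum_nonneg) auto
        moreover have "0 \<le> r k ^ d" using order_trans[OF norm_ge_zero h[OF \<open>i \<in> I\<close>]] by simp
        ultimately show ?thesis by (auto simp: E_def intro!: divide_right_mono mult_left_mono)
      qed
      finally show "\<bar>f (x k + h k i) - ?P k i\<bar> \<le> r k ^ d * E k" .
    qed
  qed
qed

lemma vdet_lower_bound_translated:
  fixes a :: "nat \<Rightarrow> nat \<Rightarrow> real^'n::finite"
  assumes "x \<longlonglongrightarrow> y" and lower: "\<And>k. c * r k powr e \<le> \<bar>vdet d (a k)\<bar>"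
  obtains K where "0 < K" "\<And>k. c * r k powr e \<le> K * \<bar>det (vandermonde d (\<lambda>i. a k i - x k))\<bar>"
proof -
  have "Bseq (\<lambda>k. det (translation_matrix d (x k)))"
    using convergent_imp_Bseq convergentI[OF det_translation_matrix_tendsto[OF assms(1)]] by blast
  then obtain K where K: "0 < K" "\<And>k. \<bar>det (translation_matrix d (x k))\<bar> \<le> K"
    by (auto elim!: BseqE)
  show thesis
  proof (rule that[OF K(1)])
    fix k
    have "c * r k powr e \<le> \<bar>det (vandermonde d (\<lambda>i. a k i - x k))\<bar> * \<bar>det (translation_matrix d (x k))\<bar>"
      using lower[of k] by (simp add: vdet_translate[of d "a k" "x k"] abs_mult)
    also have "\<dots> \<le> \<bar>det (vandermonde d (\<lambda>i. a k i - x k))\<bar> * K"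
      using K(2)[of k] by (intro mult_left_mono) auto
    finally show "c * r k powr e \<le> K * \<bar>det (vandermonde d (\<lambda>i. a k i - x k))\<bar>"
      by (simp add: mult.commute)
  qed
qed

text \<open>Since \<open>|Det V(b)| = O(r\<^bsup>D\<^esup>)\<close> for the total degree \<open>D\<close>, a lower bound \<open>c r\<^sup>e\<close> with
  \<open>r \<rightarrow> 0\<close> forces \<open>D \<le> e\<close>.\<close>
lemma degree_sum_mindex_le_exponent:
  fixes b :: "nat \<Rightarrow> nat \<Rightarrow> real^'n::finite"
  assumes r: "\<And>k. 0 < r k" "r \<longlonglongrightarrow> 0" and "0 < c" "0 < K"
    and b: "\<And>k i t. i < Ncount CARD('n) (int d) \<Longrightarrow> \<bar>b k i $ t\<bar> \<le> r k"
    and lower: "\<And>k. c * r k powr e \<le> K * \<bar>det (vandermonde d (b k))\<bar>"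
  shows "real (\<Sum>j\<in>(mindex d :: ('n \<Rightarrow> nat) set). sum j UNIV) \<le> e"
proof (rule ccontr)
  let ?D = "real (\<Sum>j\<in>(mindex d :: ('n \<Rightarrow> nat) set). sum j UNIV)"
  let ?M = "Ncount CARD('n) (int d)"
  assume "\<not> ?D \<le> e"
  have "c \<le> K * fact ?M * r k powr (?D - e)" for k
  proof -
    have "\<bar>det (vandermonde d (b k))\<bar> \<le> fact ?M * r k powr ?D"
      unfolding powr_realpow[OF r(1)[of k]] by (rule abs_det_vandermonde_le) (use b in blast)
    then have "c * r k powr e \<le> K * (fact ?M * r k powr ?D)"
      using order_trans[OF lower[of k] mult_left_mono] \<open>0 < K\<close> by simp
    then show ?thesis using r(1)[of k] by (simp add: powr_diff field_simps)
  qed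
  moreover have "(\<lambda>k. K * fact ?M * r k powr (?D - e)) \<longlonglongrightarrow> 0"
    using \<open>\<not> ?D \<le> e\<close> r(1)
    by (intro tendsto_mult_right_zero tendsto_zero_powrI[OF r(2) tendsto_const] always_eventually allI)
      (auto intro: less_imp_le)
  ultimately have "c \<le> 0" by (intro LIMSEQ_le_const) auto
  then show False using \<open>0 < c\<close> by simp
qed

lemma coeff_bound_from_samples:
  fixes b :: "nat \<Rightarrow> real^'n::finite" and C :: "('n \<Rightarrow> nat) \<Rightarrow> real" and d :: nat and p :: real
  defines "M \<equiv> Ncount CARD('n) (int d)"
    and "D \<equiv> real (\<Sum>j\<in>(mindex d :: ('n \<Rightarrow> nat) set). sum j UNIV)"
  assumes r: "0 < r" "r < 1" and "0 < c" "0 < K" "0 \<le> S" "0 \<le> E" "p \<le> d"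
    and b: "\<And>i t. i < M \<Longrightarrow> \<bar>b i $ t\<bar> \<le> r"
    and lower: "c * r powr e \<le> K * \<bar>det (vandermonde d b)\<bar>"
    and samples: "\<And>i. i < M \<Longrightarrow> \<bar>\<Sum>j\<in>mindex d. C j * monomial (b i) j\<bar> \<le> S * r powr p + r ^ d * E"
    and j: "j \<in> mindex d" "real (sum j UNIV) \<le> p + D - e"
  shows "\<bar>C j\<bar> \<le> fact M * K / c * (S * r powr (p + D - e - real (sum j UNIV)) + E)"
proof -
  define s where "s = real (sum j UNIV)"
  define Y where "Y = S * r powr p + E * r powr d"
  have pow_s: "r ^ sum j UNIV = r powr s" unfolding s_def by (rule powr_realpow[symmetric, OF r(1)])
  have pow_D: "r ^ (\<Sum>j\<in>(mindex d :: ('n \<Rightarrow> nat) set). sum j UNIV) = r powr D"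
    unfolding D_def by (rule powr_realpow[symmetric, OF r(1)])
  have "r ^ d = r powr d" by (rule powr_realpow[symmetric, OF r(1)])
  then have cramer: "\<bar>C j\<bar> * \<bar>det (vandermonde d b)\<bar> * r powr s \<le> fact M * Y * r powr D"
    using cramer_coeff_bound[OF b[unfolded M_def] samples[unfolded M_def] j(1)]
    unfolding M_def Y_def pow_s pow_D by (simp add: mult.commute)
  have "\<bar>C j\<bar> * (c * r powr e * r powr s) \<le> \<bar>C j\<bar> * (K * \<bar>det (vandermonde d b)\<bar>) * r powr s"
    using mult_right_mono[OF mult_left_mono[OF lower abs_ge_zero[of "C j"]] powr_ge_zero[of r s]]
    by (simp add: mult.assoc)
  also have "\<dots> = K * (\<bar>C j\<bar> * \<bar>det (vandermonde d b)\<bar> * r powr s)" by (simp add: ac_simps)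
  also have "\<dots> \<le> K * (fact M * Y * r powr D)" using cramer \<open>0 < K\<close> by (simp add: mult_left_mono)
  finally have "\<bar>C j\<bar> \<le> K * (fact M * Y * r powr D) / (c * r powr e * r powr s)"
    using r \<open>0 < c\<close> by (simp add: pos_le_divide_eq)
  also have "\<dots> = fact M * K / c * (S * (r powr p * r powr D / (r powr e * r powr s))
      + E * (r powr d * r powr D / (r powr e * r powr s)))"
    using r \<open>0 < c\<close> by (simp add: Y_def field_simps)
  also have "r powr p * r powr D / (r powr e * r powr s) = r powr (p + D - e - s)"
    using r by (simp add: powr_add[symmetric] powr_diff[symmetric] diff_diff_eq)
  also have "r powr d * r powr D / (r powr e * r powr s) = r powr (d + D - e - s)"
    using r by (simp add: powr_add[symmetric] powr_diff[symmetric] diff_diff_eq)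
  also have "fact M * K / c * (S * r powr (p + D - e - s) + E * r powr (d + D - e - s))
      \<le> fact M * K / c * (S * r powr (p + D - e - s) + E)"
  proof -
    have "r powr (d + D - e - s) \<le> 1"
      using r j(2) \<open>p \<le> d\<close> by (intro powr_le1) (auto simp: s_def)
    from mult_left_le[OF this \<open>0 \<le> E\<close>] show ?thesis
      using \<open>0 < c\<close> \<open>0 < K\<close> by (intro mult_left_mono add_left_mono) auto
  qed
  finally show ?thesis by (simp add: s_def)
qed

lemma flat_at0_of_scaled_samples:
  fixes a :: "nat \<Rightarrow> nat \<Rightarrow> real^'n::finite" and S :: "nat \<Rightarrow> real"
  assumes hN: "Ncount CARD('n) (int d) = N + 1" and hp: "0 < p" "p \<le> real d"
    and hr: "\<And>k. 0 < r k" and h1: "\<And>k i. i \<le> N \<Longrightarrow> dist (a k i) (a k 0) \<le> r k"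
    and h2: "r \<longlonglongrightarrow> 0" and h3: "(\<lambda>k. a k 0) \<longlonglongrightarrow> 0"
    and hc: "0 < c" and h4: "\<And>k. c * r k powr e \<le> \<bar>vdet d (a k)\<bar>"
    and hU: "open U" "0 \<in> U" and hf: "Cd_on d U f"
    and S: "\<And>k. S k = (MAX i\<in>{..N}. \<bar>f (a k i)\<bar>) / r k powr p"
    and m: "m = p + real (\<Sum>j\<in>(mindex d :: ('n \<Rightarrow> nat) set). sum j UNIV) - e"
    and scaled: "\<And>s::nat. real s \<le> m \<Longrightarrow> (\<lambda>k. S k * r k powr (m - real s)) \<longlonglongrightarrow> 0"
  shows "flat_at0 \<lfloor>m\<rfloor> f"
proof -
  define M where "M = Ncount CARD('n) (int d)"
  define b where "b k i = a k i - a k 0" for k i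
  have "0 < d" using hp by linarith
  have b_norm: "norm (b k i) \<le> r k" if "i \<in> {..N}" for k i
    using h1[of i k] that by (simp add: b_def dist_norm)
  have b_entry: "\<bar>b k i $ t\<bar> \<le> r k" if "i < M" for k i t
    using b_norm[of i k] component_le_norm_cart[of "b k i" t] that hN by (simp add: M_def)
  obtain E where E: "E \<longlonglongrightarrow> 0" "\<forall>k. 0 \<le> E k" "\<forall>\<^sub>F k in sequentially. \<forall>i\<in>{..N}.
      \<bar>f (a k 0 + b k i) - (\<Sum>j\<in>mindex d. taylor_coeff f (a k 0) j * monomial (b k i) j)\<bar> \<le> r k ^ d * E k"
    using taylor_remainder_vanishes[OF hf hU \<open>0 < d\<close> finite_atMost h3 h2, where h=b, OF b_norm] by blast
  obtain K where K: "0 < K" "\<forall>k. c * r k powr e \<le> K * \<bar>det (vandermonde d (b k))\<bar>"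
    using vdet_lower_bound_translated[where a = a, OF h3 h4] unfolding b_def by blast
  have "m \<le> d"
    using degree_sum_mindex_le_exponent[OF hr h2 hc K(1) b_entry[unfolded M_def] K(2)[rule_format]] m hp by linarith
  have S_nonneg: "0 \<le> S k" for k
  proof -
    have "0 \<le> (MAX i\<in>{..N}. \<bar>f (a k i)\<bar>)" by (rule order_trans[OF abs_ge_zero Max_ge]) auto
    then show ?thesis using hr[of k] by (simp add: S)
  qed
  have samples: "\<bar>\<Sum>j\<in>mindex d. C j * monomial (b k i) j\<bar> \<le> S k * r k powr p + r k ^ d * E k"
    if "\<bar>f (a k 0 + b k i) - (\<Sum>j\<in>mindex d. C j * monomial (b k i) j)\<bar> \<le> r k ^ d * E k" "i \<le> N" for C k i
  proof -
    have "\<bar>f (a k i)\<bar> \<le> (MAX i\<in>{..N}. \<bar>f (a k i)\<bar>)" using \<open>i \<le> N\<close> by (intro Max_ge) auto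
    also have "\<dots> = S k * r k powr p" using hr[of k] by (simp add: S)
    finally show ?thesis using that(1) by (simp add: b_def)
  qed
  have coeff_zero: "taylor_coeff f 0 j = 0" if j: "j \<in> mindex d" "real (sum j UNIV) \<le> m" for j
  proof -
    let ?bound = "\<lambda>k. fact M * K / c * (S k * r k powr (m - real (sum j UNIV)) + E k)"
    have "\<forall>\<^sub>F k in sequentially. norm (taylor_coeff f (a k 0) j) \<le> ?bound k"
      using E(3) order_tendstoD(2)[OF h2, of 1, simplified]
    proof eventually_elim
      case (elim k)
      have "\<bar>\<Sum>j\<in>mindex d. taylor_coeff f (a k 0) j * monomial (b k i) j\<bar>
          \<le> S k * r k powr p + r k ^ d * E k" if "i < M" for i
      proof -
        have "i \<le> N" using that hN by (simp add: M_def)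
        then show ?thesis using samples[where C = "taylor_coeff f (a k 0)" and k = k and i = i] elim(1) by auto
      qed
      from coeff_bound_from_samples[OF hr[of k] elim(2) hc K(1) S_nonneg E(2)[rule_format] hp(2)
          b_entry[unfolded M_def] K(2)[rule_format] this[unfolded M_def] j(1)] j(2) m
      show ?case by (simp add: M_def)
    qed
    moreover have "?bound \<longlonglongrightarrow> 0"
    proof -
      have "(\<lambda>k. S k * r k powr (m - real (sum j UNIV)) + E k) \<longlonglongrightarrow> 0"
        using tendsto_add[OF scaled[OF j(2)] E(1)] by simp
      then show ?thesis by (rule tendsto_mult_right_zero)
    qed
    ultimately have "(\<lambda>k. taylor_coeff f (a k 0) j) \<longlonglongrightarrow> 0"
      by (rule Lim_null_comparison)
    moreover have "(\<lambda>k. taylor_coeff f (a k 0) j) \<longlonglongrightarrow> taylor_coeff f 0 j"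
    proof -
      have "real (sum j UNIV) \<le> real d" using j(2) \<open>m \<le> d\<close> by linarith
      then have "sum j UNIV \<le> d" by (simp only: of_nat_le_iff)
      then show ?thesis by (rule taylor_coeff_tendsto[OF hf hU _ h3])
    qed
    ultimately show ?thesis using LIMSEQ_unique by blast
  qed
  show ?thesis by (rule flat_at0_if_taylor_coeff_eq_0[OF hf hU \<open>m \<le> d\<close> coeff_zero])
qed

lemma tendsto_zero_mult_powr:
  fixes S r :: "nat \<Rightarrow> real"
  assumes "S \<longlonglongrightarrow> 0" "\<And>k. 0 < r k" "r \<longlonglongrightarrow> 0" "0 \<le> q"
  shows "(\<lambda>k. S k * r k powr q) \<longlonglongrightarrow> 0"
proof (rule Lim_null_comparison)
  show "\<forall>\<^sub>F k in sequentially. norm (S k * r k powr q) \<le> \<bar>S k\<bar>"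
    using order_tendstoD(2)[OF assms(3), of 1, simplified]
  proof eventually_elim
    case (elim k)
    then have "r k powr q \<le> 1" using assms(2)[of k] by (intro powr_le1 assms(4)) auto
    moreover have "norm (S k * r k powr q) = \<bar>S k\<bar> * r k powr q" using assms(2)[of k] by (simp add: abs_mult)
    ultimately show ?case using mult_left_le[of "r k powr q" "\<bar>S k\<bar>"] by simp
  qed
qed (use tendsto_rabs_zero[OF assms(1)] in simp)

lemma Bseq_mult_powr_tendsto_zero:
  fixes S r :: "nat \<Rightarrow> real"
  assumes "Bseq S" "\<And>k. 0 < r k" "r \<longlonglongrightarrow> 0" "0 < q"
  shows "(\<lambda>k. S k * r k powr q) \<longlonglongrightarrow> 0"
proof -
  have "(\<lambda>k. r k powr q) \<longlonglongrightarrow> 0"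
    using assms(2-4) by (intro tendsto_zero_powrI always_eventually allI) (auto intro: less_imp_le)
  with assms(1) show ?thesis
    unfolding tendsto_Zfun_iff diff_zero by (rule bounded_bilinear.Bfun_prod_Zfun[OF bounded_bilinear_mult])
qed

theorem theorem6p2:
  fixes d :: nat and N :: nat and p c e :: real
    and r :: "nat \<Rightarrow> real" and a :: "nat \<Rightarrow> nat \<Rightarrow> real^'n::finite"
    and f :: "real^'n \<Rightarrow> real" and U :: "(real^'n) set"
  assumes hN: "Ncount CARD('n) (int d) = N + 1"
    and hp: "0 < p" "p \<le> real d"
    and hr: "\<And>k. 0 < r k"
    and hdist: "\<And>k. inj_on (a k) {..N}"
    and h1: "\<And>k i. i \<le> N \<Longrightarrow> dist (a k i) (a k 0) \<le> r k"
    and h2: "r \<longlonglongrightarrow> 0"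
    and h3: "(\<lambda>k. a k 0) \<longlonglongrightarrow> 0"
    and hc: "0 < c" and he: "0 < e"
    and h4: "\<And>k. \<bar>vdet d (a k)\<bar> \<ge> c * r k powr e"
    and hU: "open U" "0 \<in> U"
    and hf: "Cd_on d U f"
  defines "S \<equiv> (\<lambda>k. (MAX i\<in>{..N}. \<bar>f (a k i)\<bar>) / r k powr p)"
    and "m \<equiv> p - (e - real CARD('n) * real (Ncount (CARD('n) + 1) (int d - 1)))"
  shows "(m \<in> \<int> \<longrightarrow> S \<longlonglongrightarrow> 0 \<longrightarrow> flat_at0 \<lfloor>m\<rfloor> f)
       \<and> (m \<notin> \<int> \<longrightarrow> Bseq S \<longrightarrow> flat_at0 \<lfloor>m\<rfloor> f)"
proof -
  have S_eq: "\<And>k. S k = (MAX i\<in>{..N}. \<bar>f (a k i)\<bar>) / r k powr p" by (simp add: S_def)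
  have m_eq: "m = p + real (\<Sum>j\<in>(mindex d :: ('n \<Rightarrow> nat) set). sum j UNIV) - e"
    by (simp add: m_def degree_sum_mindex)
  note flat = flat_at0_of_scaled_samples[OF hN hp hr h1 h2 h3 hc h4 hU hf S_eq m_eq]
  show ?thesis
  proof (intro conjI impI flat)
    fix s :: nat assume "m \<in> \<int>" "S \<longlonglongrightarrow> 0" "real s \<le> m"
    then show "(\<lambda>k. S k * r k powr (m - real s)) \<longlonglongrightarrow> 0"
      using hr h2 by (intro tendsto_zero_mult_powr) auto
  next
    fix s :: nat assume "m \<notin> \<int>" "Bseq S" "real s \<le> m"
    moreover from \<open>m \<notin> \<int>\<close> have "real s \<noteq> m" by (metis Ints_of_nat)
    ultimately show "(\<lambda>k. S k * r k powr (m - real s)) \<longlonglongrightarrow> 0"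
      using hr h2 by (intro Bseq_mult_powr_tendsto_zero) auto
  qed
qed

end
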